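(* For each finite set $I$ define the linear map $\operatorname{bg}[I]:\mathbf{GP}^+[I]\to\mathbf{CGP}^+[I]$ by $$\operatorname{bg}(P)=\sum_{F}(-1)^{\dim F}\operatorname{cone}_F(P),$$ the sum over the nonempty relatively bounded faces $F$ of $P$. Then each $\operatorname{cone}_F(P)$ appearing lies in $\mathbf{CGP}^+[I]$, and the maps $\operatorname{bg}[I]$ form a morphism of Hopf monoids $\operatorname{bg}:\mathbf{GP}^+\to\mathbf{CGP}^+$.
   Context: $\mathbf{GP}^+$ is the Hopf monoid of extended generalized permutahedra: $\mathbf{GP}^+[I]$ has basis the polyhedra $P=\{x\in\mathbb R^I:\sum_{i\in I}x_i=z(I),\ \sum_{i\in A}x_i\le z(A)\ \forall A\subseteq I\}$ with $z:2^I\to\mathbb R\cup\{\infty\}$ submodular on its finite values and $z(I)$ finite; product $m_{S,T}(P,Q)=P\times Q$; coproduct $\Delta_{S,T}(P)=P|_S\otimes P/_S$ where $P|_S\times P/_S$ is the face of $P$ maximizing $\sum_{i\in S}x_i$ if this functional is bounded above on $P$, and $0$ otherwise. $\mathbf{CGP}^+\subseteq\mathbf{GP}^+$ is the Hopf submonoid spanned by the extended generalized permutahedra that are translated polyhedral cones (sets $v+C$ with $C$ a polyhedral cone). For a polyhedron $P$ and $f\in P$, the tangent cone is $\operatorname{cone}_f(P)=\{f+x:\ f+\epsilon x\in P\text{ for all sufficiently small }\epsilon>0\}$; for a face $F$, $\operatorname{cone}_F(P)=\operatorname{cone}_f(P)$ for any $f$ in the relative interior of $F$ (independent of the choice). A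 face $F$ of $P$ is relatively bounded if $F/L$ is a bounded face of $P/L$, where $L$ is the lineality space of $P$. *)

theory Defs
  imports "HOL-Analysis.Analysis"
begin

text \<open>The labels of the species are elements of an arbitrary finite type 'e;
  a finite set I of labels is a subset of UNIV :: 'e set.  The space R^I is realised as the
  subspace of real^'e of vectors vanishing outside I.  Vector spaces of the Hopf monoids are
  free 'k-vector spaces on sets of polyhedra: finitely supported functions from polyhedra to
  the field 'k.  Tensor products of such free spaces are free on pairs of basis elements.\<close>

type_synonym 'e pt = "real^'e"
type_synonym 'e poly = "'e pt set"

definition supp :: "('a \<Rightarrow> 'k::zero) \<Rightarrow> 'a set" where
  "supp c = {P. c P \<noteq> 0}"

definition span_of :: "'a set \<Rightarrow> ('a \<Rightarrow> 'k::zero) set" where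
  "span_of B = {c. finite (supp c) \<and> supp c \<subseteq> B}"

definition RI :: "'e set \<Rightarrow> ('e::finite) pt set" where
  "RI I = {x. \<forall>i. i \<notin> I \<longrightarrow> x $ i = 0}"

definition ext_submodular :: "'e set \<Rightarrow> ('e set \<Rightarrow> ereal) \<Rightarrow> bool" where
  "ext_submodular I z \<longleftrightarrow>
     (\<forall>A \<subseteq> I. z A \<noteq> -\<infinity>) \<and> z I \<noteq> \<infinity> \<and> z {} = 0 \<and>
     (\<forall>A \<subseteq> I. \<forall>B \<subseteq> I. z A \<noteq> \<infinity> \<longrightarrow> z B \<noteq> \<infinity> \<longrightarrow>
        z (A \<union> B) + z (A \<inter> B) \<le> z A + z B)"

definition gp_of :: "'e set \<Rightarrow> ('e set \<Rightarrow> ereal) \<Rightarrow> ('e::finite) poly" where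
  "gp_of I z = {x \<in> RI I. ereal (\<Sum>i\<in>I. x $ i) = z I \<and>
                          (\<forall>A \<subseteq> I. ereal (\<Sum>i\<in>A. x $ i) \<le> z A)}"

text \<open>Basis of GP^+[I]: extended generalized permutahedra.\<close>
definition GP :: "'e set \<Rightarrow> ('e::finite) poly set" where
  "GP I = {P. \<exists>z. ext_submodular I z \<and> P = gp_of I z}"

definition polyhedral_cone :: "('e::finite) poly \<Rightarrow> bool" where
  "polyhedral_cone C \<longleftrightarrow> polyhedron C \<and> cone C"

text \<open>Basis of CGP^+[I]: extended generalized permutahedra that are translated polyhedral cones.\<close>
definition CGP :: "'e set \<Rightarrow> ('e::finite) poly set" where
  "CGP I = {P \<in> GP I. \<exists>v C. polyhedral_cone C \<and> P = (\<lambda>x. v + x) ` C}"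

definition tangent_cone :: "('e::finite) poly \<Rightarrow> 'e pt \<Rightarrow> 'e poly" where
  "tangent_cone P f = {f + x | x. \<exists>e>0. \<forall>\<epsilon>. 0 < \<epsilon> \<and> \<epsilon> < e \<longrightarrow> f + \<epsilon> *\<^sub>R x \<in> P}"

definition face_cone :: "('e::finite) poly \<Rightarrow> 'e poly \<Rightarrow> 'e poly" where
  "face_cone P F = tangent_cone P (SOME f. f \<in> rel_interior F)"

definition lineality :: "('e::finite) poly \<Rightarrow> 'e pt set" where
  "lineality P = {d. \<forall>x\<in>P. \<forall>t::real. x + t *\<^sub>R d \<in> P}"

text \<open>F is relatively bounded: F/L is a bounded face of P/L, L the lineality space of P.
  Boundedness of F/L in the quotient means F \<subseteq> B + L for a bounded B.\<close>
definition rel_bounded_face :: "('e::finite) poly \<Rightarrow> 'e poly \<Rightarrow> bool" where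
  "rel_bounded_face P F \<longleftrightarrow> F face_of P \<and>
     (\<exists>B. bounded B \<and> F \<subseteq> {b + l | b l. b \<in> B \<and> l \<in> lineality P})"

definition dimension :: "('e::finite) poly \<Rightarrow> nat" where
  "dimension F = nat (aff_dim F)"

definition lin_ext :: "('a \<Rightarrow> 'b \<Rightarrow> 'k::comm_ring_1) \<Rightarrow> ('a \<Rightarrow> 'k) \<Rightarrow> ('b \<Rightarrow> 'k)" where
  "lin_ext f c = (\<lambda>Q. \<Sum>P\<in>supp c. c P * f P Q)"

definition bg_basis :: "('e::finite) poly \<Rightarrow> 'e poly \<Rightarrow> 'k::comm_ring_1" where
  "bg_basis P = (\<lambda>Q. \<Sum>F\<in>{F. F face_of P \<and> F \<noteq> {} \<and> rel_bounded_face P F \<and> face_cone P F = Q}.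
                       (-1) ^ dimension F)"

definition bg :: "(('e::finite) poly \<Rightarrow> 'k::comm_ring_1) \<Rightarrow> ('e poly \<Rightarrow> 'k)" where
  "bg c = lin_ext bg_basis c"

definition poly_prod :: "'e set \<Rightarrow> ('e::finite) poly \<Rightarrow> 'e poly \<Rightarrow> 'e poly" where
  "poly_prod S P Q = {(\<chi> i. if i \<in> S then p $ i else q $ i) | p q. p \<in> P \<and> q \<in> Q}"

definition mult :: "'e set \<Rightarrow> (('e::finite) poly \<Rightarrow> 'k::comm_ring_1) \<Rightarrow> ('e poly \<Rightarrow> 'k) \<Rightarrow> ('e poly \<Rightarrow> 'k)" where
  "mult S a b = (\<lambda>R. \<Sum>P\<in>supp a. \<Sum>Q\<in>supp b. if poly_prod S P Q = R then a P * b Q else 0)"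

definition restr :: "'e set \<Rightarrow> ('e::finite) poly \<Rightarrow> 'e poly" where
  "restr S F = (\<lambda>x. \<chi> i. if i \<in> S then x $ i else 0) ` F"

definition bounded_above_on :: "'e set \<Rightarrow> ('e::finite) poly \<Rightarrow> bool" where
  "bounded_above_on S P \<longleftrightarrow> (\<exists>M. \<forall>x\<in>P. (\<Sum>i\<in>S. x $ i) \<le> M)"

definition max_face :: "'e set \<Rightarrow> ('e::finite) poly \<Rightarrow> 'e poly" where
  "max_face S P = {x \<in> P. \<forall>y\<in>P. (\<Sum>i\<in>S. y $ i) \<le> (\<Sum>i\<in>S. x $ i)}"

text \<open>Delta_{S,T}(P) = P|_S \<otimes> P/_S (T the complement of S in I), or 0.\<close>
definition comult :: "'e set \<Rightarrow> 'e set \<Rightarrow> (('e::finite) poly \<Rightarrow> 'k::comm_ring_1) \<Rightarrow> ('e poly \<times> 'e poly \<Rightarrow> 'k)" where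
  "comult S T a = (\<lambda>(R1, R2). \<Sum>P\<in>supp a.
      if bounded_above_on S P \<and> restr S (max_face S P) = R1 \<and> restr T (max_face S P) = R2
      then a P else 0)"

definition tensor_ext :: "('a \<Rightarrow> 'b \<Rightarrow> 'k::comm_ring_1) \<Rightarrow> ('c \<Rightarrow> 'd \<Rightarrow> 'k) \<Rightarrow> ('a \<times> 'c \<Rightarrow> 'k) \<Rightarrow> ('b \<times> 'd \<Rightarrow> 'k)" where
  "tensor_ext f g c = (\<lambda>(R1, R2). \<Sum>PQ\<in>supp c. c PQ * f (fst PQ) R1 * g (snd PQ) R2)"

text \<open>Unit (the point R^{}) and counit (on H[{}]).\<close>
definition unit_elt :: "(('e::finite) poly \<Rightarrow> 'k::comm_ring_1)" where
  "unit_elt = (\<lambda>Q. if Q = RI {} then 1 else 0)"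

definition counit :: "(('e::finite) poly \<Rightarrow> 'k::comm_ring_1) \<Rightarrow> 'k" where
  "counit c = (\<Sum>P\<in>supp c. c P)"

text \<open>Species relabelling along a permutation \<sigma> of the labels (restricting to I \<rightarrow> \<sigma> ` I).\<close>
definition relabel_pt :: "('e \<Rightarrow> 'e) \<Rightarrow> ('e::finite) pt \<Rightarrow> 'e pt" where
  "relabel_pt \<sigma> x = (\<chi> j. x $ inv \<sigma> j)"

definition relabel :: "('e \<Rightarrow> 'e) \<Rightarrow> (('e::finite) poly \<Rightarrow> 'k::comm_ring_1) \<Rightarrow> ('e poly \<Rightarrow> 'k)" where
  "relabel \<sigma> c = (\<lambda>Q. \<Sum>P\<in>supp c. if relabel_pt \<sigma> ` P = Q then c P else 0)"

end

(*
  At a point f of P = gp_of I z the tangent cone is gp_of I z', where z' keeps z on the sets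
  tight at f and is infinite elsewhere: non-tight constraints hold with a uniform slack. Tight
  sets form a lattice, so z' is again submodular, and the tangent cone is f plus a polyhedral
  cone. Tight sets are the same at all relative interior points of a face, so the face cone is
  well defined and lies in CGP.

  For S and T disjoint, P x Q is the Minkowski sum of sets in complementary coordinate
  subspaces, a linear image of the cartesian product; faces, relative interiors, dimensions,
  lineality spaces and tangent cones all split, which gives multiplicativity.

  For the coproduct, every point of the face of P maximizing the sum over S makes S tight
  (exchanging mass between a coordinate in S and one in T would otherwise increase that sum),
  so this face is P|_S x P/_S. A face cone of P is bounded above in that direction exactly
  when its face lies in the maximal face, and its own maximal face is then the corresponding
  face cone of P|_S x P/_S. Naturality holds since relabelling is a linear automorphism, and
  all identities are checked on bases and extended linearly.
*)
theory Submission
  imports Defs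
begin

section \<open>Coordinate sums and extended generalized permutahedra\<close>

definition coord_sum :: "'e set \<Rightarrow> ('e::finite) pt \<Rightarrow> real" where
  "coord_sum A x = (\<Sum>i\<in>A. x $ i)"

definition indicator_vec :: "'e set \<Rightarrow> ('e::finite) pt" where
  "indicator_vec A = (\<chi> i. if i \<in> A then 1 else 0)"

lemma coord_sum_add: "coord_sum A (x + y) = coord_sum A x + coord_sum A y"
  by (simp add: coord_sum_def sum.distrib)

lemma coord_sum_scaleR: "coord_sum A (c *\<^sub>R x) = c * coord_sum A x"
  by (simp add: coord_sum_def sum_distrib_left)

lemma coord_sum_diff: "coord_sum A (x - y) = coord_sum A x - coord_sum A y"
  by (simp add: coord_sum_def sum_subtractf)

lemma coord_sum_Un_Int: "coord_sum (A \<union> B) x + coord_sum (A \<inter> B) x = coord_sum A x + coord_sum B x"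
  unfolding coord_sum_def by (rule sum.union_inter) auto

lemma coord_sum_disjoint_Un: "A \<inter> B = {} \<Longrightarrow> coord_sum (A \<union> B) x = coord_sum A x + coord_sum B x"
  using coord_sum_Un_Int[of A B x] by (simp add: coord_sum_def)

lemma coord_sum_axis: "coord_sum A (axis i 1) = (if i \<in> A then 1 else 0)"
  by (simp add: coord_sum_def axis_def)

lemma coord_sum_inner: "coord_sum A x = indicator_vec A \<bullet> x"
proof -
  have "indicator_vec A \<bullet> x = (\<Sum>i\<in>UNIV. if i \<in> A then x $ i else 0)"
    unfolding indicator_vec_def inner_vec_def by (intro sum.cong) auto
  also have "\<dots> = (\<Sum>i\<in>{i\<in>UNIV. i \<in> A}. x $ i)" by (rule sum.inter_filter[symmetric]) simp
  finally show ?thesis by (simp add: coord_sum_def)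
qed

lemma coord_sum_RI: "u \<in> RI S \<Longrightarrow> coord_sum A u = coord_sum (A \<inter> S) u"
  unfolding coord_sum_def RI_def by (rule sum.mono_neutral_right) auto

lemma RI_add: "x \<in> RI S \<Longrightarrow> y \<in> RI S \<Longrightarrow> x + y \<in> RI S"
  by (simp add: RI_def)

lemma RI_diff: "x \<in> RI S \<Longrightarrow> y \<in> RI S \<Longrightarrow> x - y \<in> RI S"
  by (simp add: RI_def)

lemma RI_scaleR: "x \<in> RI S \<Longrightarrow> c *\<^sub>R x \<in> RI S"
  by (simp add: RI_def)

lemma RI_mono: "x \<in> RI S \<Longrightarrow> S \<subseteq> T \<Longrightarrow> x \<in> RI T"
  by (auto simp: RI_def)

lemma RI_cancel_scaleR: "f \<in> RI I \<Longrightarrow> f + c *\<^sub>R x \<in> RI I \<Longrightarrow> c \<noteq> 0 \<Longrightarrow> x \<in> RI I"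
  by (auto simp: RI_def)

lemma RI_empty: "RI {} = {0}"
  by (auto simp: RI_def vec_eq_iff)

lemma gp_of_eq: "gp_of I z = {x \<in> RI I. ereal (coord_sum I x) = z I \<and> (\<forall>A \<subseteq> I. ereal (coord_sum A x) \<le> z A)}"
  by (simp add: gp_of_def coord_sum_def)

lemma gp_ofD:
  assumes "x \<in> gp_of I z"
  shows "x \<in> RI I" "ereal (coord_sum I x) = z I" "\<And>A. A \<subseteq> I \<Longrightarrow> ereal (coord_sum A x) \<le> z A"
  using assms by (auto simp: gp_of_eq)

lemma ext_submodularD:
  assumes "ext_submodular I z"
  shows "\<And>A. A \<subseteq> I \<Longrightarrow> z A \<noteq> -\<infinity>" "z I \<noteq> \<infinity>" "z {} = 0"
    "\<And>A B. A \<subseteq> I \<Longrightarrow> B \<subseteq> I \<Longrightarrow> z A \<noteq> \<infinity> \<Longrightarrow> z B \<noteq> \<infinity> \<Longrightarrow> z (A \<union> B) + z (A \<inter> B) \<le> z A + z B"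
  using assms unfolding ext_submodular_def by blast+

lemma polyhedron_RI: "polyhedron (RI (I::('e::finite) set))"
proof -
  have "RI I = \<Inter> ((\<lambda>i. {x. (axis i 1 :: 'e pt) \<bullet> x = 0}) ` (- I))"
    by (auto simp: RI_def inner_axis')
  then show ?thesis by (auto intro!: polyhedron_Inter polyhedron_hyperplane)
qed

lemma polyhedron_coord_sum_le: "polyhedron {x::('e::finite) pt. ereal (coord_sum A x) \<le> c}"
  by (cases c) (auto simp: coord_sum_inner intro: polyhedron_halfspace_le)

lemma polyhedron_coord_sum_eq: "polyhedron {x::('e::finite) pt. ereal (coord_sum A x) = c}"
  by (cases c) (auto simp: coord_sum_inner intro: polyhedron_hyperplane)

lemma polyhedron_gp_of: "polyhedron (gp_of I z :: ('e::finite) poly)"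
proof -
  have eq: "gp_of I z = RI I \<inter> {x. ereal (coord_sum I x) = z I} \<inter>
      \<Inter> ((\<lambda>A. {x. ereal (coord_sum A x) \<le> z A}) ` Pow I)"
    by (auto simp: gp_of_eq)
  show ?thesis
    unfolding eq by (intro polyhedron_Int polyhedron_RI polyhedron_coord_sum_eq polyhedron_Inter)
      (auto intro: polyhedron_coord_sum_le)
qed

lemma GP_E:
  assumes "P \<in> GP I"
  obtains z where "ext_submodular I z" "P = gp_of I z"
  using assms by (auto simp: GP_def)

lemma GP_subset_RI: "P \<in> GP I \<Longrightarrow> P \<subseteq> RI I"
  by (auto simp: GP_def gp_of_def)

lemma convex_GP: "P \<in> GP I \<Longrightarrow> convex P"
  by (metis GP_E polyhedron_gp_of polyhedron_imp_convex)

lemma finite_faces_GP: "P \<in> GP I \<Longrightarrow> finite {F. F face_of P}"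
  by (metis GP_E finite_polyhedron_faces polyhedron_gp_of)

lemma GP_empty: "GP {} = {{0::('e::finite) pt}}"
proof -
  have "gp_of {} z = {0::'e pt}" if "ext_submodular {} z" for z
    using that by (auto simp: gp_of_def RI_empty ext_submodular_def)
  moreover have "ext_submodular {} (\<lambda>_. 0)" by (simp add: ext_submodular_def)
  ultimately show ?thesis unfolding GP_def by blast
qed

definition tight :: "'e set \<Rightarrow> ('e set \<Rightarrow> ereal) \<Rightarrow> ('e::finite) pt \<Rightarrow> 'e set \<Rightarrow> bool" where
  "tight I z f A \<longleftrightarrow> A \<subseteq> I \<and> ereal (coord_sum A f) = z A"

lemma tight_ground_set: "f \<in> gp_of I z \<Longrightarrow> tight I z f I"
  by (auto simp: tight_def gp_of_eq)

lemma tight_empty: "ext_submodular I z \<Longrightarrow> tight I z f {}"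
  by (simp add: tight_def coord_sum_def ext_submodular_def)

lemma tight_Un_Int:
  assumes sm: "ext_submodular I z" and f: "f \<in> gp_of I z"
    and A: "tight I z f A" and B: "tight I z f B"
  shows "tight I z f (A \<union> B) \<and> tight I z f (A \<inter> B)"
proof -
  have AI: "A \<subseteq> I" "B \<subseteq> I" and zA: "z A = ereal (coord_sum A f)" and zB: "z B = ereal (coord_sum B f)"
    using A B by (auto simp: tight_def)
  have le: "ereal (coord_sum (A \<union> B) f) \<le> z (A \<union> B)" "ereal (coord_sum (A \<inter> B) f) \<le> z (A \<inter> B)"
    using AI by (auto intro!: gp_ofD(3)[OF f])
  have sub: "z (A \<union> B) + z (A \<inter> B) \<le> z A + z B"
    using ext_submodularD(4)[OF sm AI] zA zB by simp
  have "z (A \<union> B) \<noteq> -\<infinity>" "z (A \<inter> B) \<noteq> -\<infinity>"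
    using ext_submodularD(1)[OF sm, of "A \<union> B"] ext_submodularD(1)[OF sm, of "A \<inter> B"] AI by auto
  with sub le zA zB coord_sum_Un_Int[of A B f]
  have "z (A \<union> B) = ereal (coord_sum (A \<union> B) f) \<and> z (A \<inter> B) = ereal (coord_sum (A \<inter> B) f)"
    by (cases "z (A \<union> B)"; cases "z (A \<inter> B)") auto
  then show ?thesis using AI by (auto simp: tight_def)
qed

lemma tight_Inter_Union:
  assumes sm: "ext_submodular I z" and x: "x \<in> gp_of I z"
    and "finite \<F>" "\<F> \<noteq> {}" "\<And>A. A \<in> \<F> \<Longrightarrow> tight I z x A"
  shows "tight I z x (\<Inter>\<F>) \<and> tight I z x (\<Union>\<F>)"
  using assms(3-5)
proof (induction \<F> rule: finite_ne_induct)
  case (insert A \<F>)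
  then show ?case using tight_Un_Int[OF sm x] by (metis Inter_insert Union_insert insertCI)
qed simp

text \<open>Non-tight finite constraints hold with a uniform slack, so near a point only the tight
  constraints matter.\<close>

lemma uniform_slack:
  assumes f: "f \<in> gp_of I z" and sm: "ext_submodular I z"
  obtains d where "d > 0"
    "\<And>A. A \<subseteq> I \<Longrightarrow> \<not> tight I z f A \<Longrightarrow> z A \<noteq> \<infinity> \<Longrightarrow> coord_sum A f + d \<le> real_of_ereal (z A)"
proof -
  define N where "N = {A. A \<subseteq> I \<and> \<not> tight I z f A \<and> z A \<noteq> \<infinity>}"
  define d where "d = Min (insert 1 ((\<lambda>A. real_of_ereal (z A) - coord_sum A f) ` N))"
  have pos: "real_of_ereal (z A) - coord_sum A f > 0" if "A \<in> N" for A
  proof -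
    have A: "A \<subseteq> I" "\<not> tight I z f A" "z A \<noteq> \<infinity>" using that by (auto simp: N_def)
    then show ?thesis
      using ext_submodularD(1)[OF sm A(1)] gp_ofD(3)[OF f A(1)] by (cases "z A") (auto simp: tight_def)
  qed
  have fin: "finite N" by (simp add: N_def)
  then have "d > 0" using pos unfolding d_def by (subst Min_gr_iff) auto
  moreover have "coord_sum A f + d \<le> real_of_ereal (z A)"
    if "A \<subseteq> I" "\<not> tight I z f A" "z A \<noteq> \<infinity>" for A
  proof -
    have "d \<le> real_of_ereal (z A) - coord_sum A f"
      unfolding d_def using fin that by (intro Min_le) (auto simp: N_def)
    then show ?thesis by simp
  qed
  ultimately show ?thesis by (rule that)
qed

definition tight_restr :: "'e set \<Rightarrow> ('e set \<Rightarrow> ereal) \<Rightarrow> ('e::finite) poly \<Rightarrow> 'e set \<Rightarrow> ereal" where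
  "tight_restr I z X A = (if \<forall>g\<in>X. tight I z g A then z A else \<infinity>)"

lemma ext_submodular_tight_restr:
  assumes sm: "ext_submodular I z" and X: "X \<subseteq> gp_of I z" "X \<noteq> {}"
  shows "ext_submodular I (tight_restr I z X)"
  unfolding ext_submodular_def
proof (intro conjI allI impI)
  have fin: "z A \<noteq> \<infinity>" if "\<forall>g\<in>X. tight I z g A" for A
    using that X(2) by (auto simp: tight_def)
  show "tight_restr I z X A \<noteq> -\<infinity>" if "A \<subseteq> I" for A
    using ext_submodularD(1)[OF sm that] by (simp add: tight_restr_def)
  have "\<forall>g\<in>X. tight I z g I" using X(1) tight_ground_set by blast
  then show "tight_restr I z X I \<noteq> \<infinity>"
    using fin by (simp add: tight_restr_def)
  show "tight_restr I z X {} = 0"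
    using tight_empty[OF sm] ext_submodularD(3)[OF sm] by (simp add: tight_restr_def)
  fix A B assume AB: "A \<subseteq> I" "B \<subseteq> I" "tight_restr I z X A \<noteq> \<infinity>" "tight_restr I z X B \<noteq> \<infinity>"
  then have tA: "\<forall>g\<in>X. tight I z g A" and tB: "\<forall>g\<in>X. tight I z g B"
    by (auto simp: tight_restr_def split: if_splits)
  then have "\<forall>g\<in>X. tight I z g (A \<union> B) \<and> tight I z g (A \<inter> B)"
    using tight_Un_Int[OF sm] X(1) by blast
  then show "tight_restr I z X (A \<union> B) + tight_restr I z X (A \<inter> B)
      \<le> tight_restr I z X A + tight_restr I z X B"
    using ext_submodularD(4)[OF sm AB(1,2) fin[OF tA] fin[OF tB]] tA tB by (simp add: tight_restr_def)
qed

lemma tangent_cone_gp_of_subset: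
  assumes f: "f \<in> gp_of I z"
  shows "tangent_cone (gp_of I z) f \<subseteq> gp_of I (tight_restr I z {f})"
proof
  fix y assume "y \<in> tangent_cone (gp_of I z) f"
  then obtain x e where y: "y = f + x" and e: "e > 0"
    and ex: "\<And>\<epsilon>. 0 < \<epsilon> \<Longrightarrow> \<epsilon> < e \<Longrightarrow> f + \<epsilon> *\<^sub>R x \<in> gp_of I z"
    unfolding tangent_cone_def by blast
  define p where "p = f + (e/2) *\<^sub>R x"
  have p: "p \<in> gp_of I z" unfolding p_def using e by (intro ex) auto
  have "x \<in> RI I" using RI_cancel_scaleR[OF gp_ofD(1)[OF f]] gp_ofD(1)[OF p] e by (simp add: p_def)
  then have "y \<in> RI I" using RI_add[OF gp_ofD(1)[OF f]] y by simp
  moreover have "coord_sum I p = coord_sum I f"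
    using gp_ofD(2)[OF p] gp_ofD(2)[OF f] by (metis ereal.inject)
  then have "coord_sum I x = 0" using e by (simp add: p_def coord_sum_add coord_sum_scaleR)
  then have "ereal (coord_sum I y) = tight_restr I z {f} I"
    using gp_ofD(2)[OF f] tight_ground_set[OF f] by (simp add: tight_restr_def y coord_sum_add)
  moreover have "ereal (coord_sum A y) \<le> tight_restr I z {f} A" if A: "A \<subseteq> I" for A
  proof (cases "tight I z f A")
    case True
    then have zA: "z A = ereal (coord_sum A f)" by (simp add: tight_def)
    then have "(e/2) * coord_sum A x \<le> 0"
      using gp_ofD(3)[OF p A] by (simp add: p_def coord_sum_add coord_sum_scaleR)
    then have "coord_sum A x \<le> 0" using e by (simp add: mult_le_0_iff)
    then show ?thesis using True zA by (simp add: tight_restr_def y coord_sum_add)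
  qed (simp add: tight_restr_def)
  ultimately show "y \<in> gp_of I (tight_restr I z {f})" by (simp add: gp_of_eq)
qed

lemma gp_of_step:
  assumes sm: "ext_submodular I z" and f: "f \<in> gp_of I z" and y: "y \<in> gp_of I (tight_restr I z {f})"
    and eps: "0 \<le> \<epsilon>" "\<And>A. A \<subseteq> I \<Longrightarrow> \<not> tight I z f A \<Longrightarrow> z A \<noteq> \<infinity> \<Longrightarrow>
      coord_sum A f + \<epsilon> * coord_sum A (y - f) \<le> real_of_ereal (z A)"
  shows "f + \<epsilon> *\<^sub>R (y - f) \<in> gp_of I z"
proof -
  have "f + \<epsilon> *\<^sub>R (y - f) \<in> RI I" using gp_ofD(1)[OF y] gp_ofD(1)[OF f] by (simp add: RI_def)
  moreover have "tight_restr I z {f} I = z I" using tight_ground_set[OF f] by (simp add: tight_restr_def)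
  then have "coord_sum I y = coord_sum I f"
    using gp_ofD(2)[OF y] gp_ofD(2)[OF f] by (metis ereal.inject)
  then have "ereal (coord_sum I (f + \<epsilon> *\<^sub>R (y - f))) = z I"
    using gp_ofD(2)[OF f] by (simp add: coord_sum_add coord_sum_scaleR coord_sum_diff)
  moreover have "ereal (coord_sum A (f + \<epsilon> *\<^sub>R (y - f))) \<le> z A" if A: "A \<subseteq> I" for A
  proof (cases "tight I z f A")
    case True
    then have zA: "z A = ereal (coord_sum A f)" by (simp add: tight_def)
    then have "coord_sum A (y - f) \<le> 0"
      using gp_ofD(3)[OF y A] True by (simp add: tight_restr_def coord_sum_diff)
    then show ?thesis using zA eps(1) by (simp add: coord_sum_add coord_sum_scaleR mult_nonneg_nonpos)
  next
    case False
    then show ?thesis using eps(2)[OF A False] ext_submodularD(1)[OF sm A]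
      by (cases "z A") (auto simp: coord_sum_add coord_sum_scaleR)
  qed
  ultimately show ?thesis by (simp add: gp_of_eq)
qed

lemma gp_of_tight_restr_subset_tangent_cone:
  assumes sm: "ext_submodular I z" and f: "f \<in> gp_of I z"
  shows "gp_of I (tight_restr I z {f}) \<subseteq> tangent_cone (gp_of I z) f"
proof
  fix y assume y: "y \<in> gp_of I (tight_restr I z {f})"
  obtain d where d: "d > 0"
    and slack: "\<And>A. A \<subseteq> I \<Longrightarrow> \<not> tight I z f A \<Longrightarrow> z A \<noteq> \<infinity> \<Longrightarrow> coord_sum A f + d \<le> real_of_ereal (z A)"
    using uniform_slack[OF f sm] by blast
  define K where "K = (\<Sum>A\<in>Pow I. \<bar>coord_sum A (y - f)\<bar>) + 1"
  have K: "coord_sum A (y - f) \<le> K" if "A \<subseteq> I" for A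
    using member_le_sum[of A "Pow I" "\<lambda>A. \<bar>coord_sum A (y - f)\<bar>"] that by (auto simp: K_def)
  have Kpos: "K > 0" unfolding K_def by (smt (verit) sum_nonneg abs_ge_zero)
  define e where "e = d / K"
  have "f + \<epsilon> *\<^sub>R (y - f) \<in> gp_of I z" if eps: "0 < \<epsilon>" "\<epsilon> < e" for \<epsilon>
  proof (rule gp_of_step[OF sm f y])
    show "0 \<le> \<epsilon>" using eps by simp
    fix A assume A: "A \<subseteq> I" and "\<not> tight I z f A" "z A \<noteq> \<infinity>"
    then have "coord_sum A f + d \<le> real_of_ereal (z A)" by (rule slack)
    moreover have "\<epsilon> * coord_sum A (y - f) \<le> \<epsilon> * K" using K[OF A] eps by (intro mult_left_mono) auto
    moreover have "\<epsilon> * K < d" using eps Kpos by (simp add: e_def field_simps)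
    ultimately show "coord_sum A f + \<epsilon> * coord_sum A (y - f) \<le> real_of_ereal (z A)" by linarith
  qed
  moreover have "e > 0" using d Kpos by (simp add: e_def)
  ultimately have "f + (y - f) \<in> tangent_cone (gp_of I z) f"
    unfolding tangent_cone_def by blast
  then show "y \<in> tangent_cone (gp_of I z) f" by simp
qed

lemma tangent_cone_gp_of:
  assumes "ext_submodular I z" "f \<in> gp_of I z"
  shows "tangent_cone (gp_of I z) f = gp_of I (tight_restr I z {f})"
  using tangent_cone_gp_of_subset gp_of_tight_restr_subset_tangent_cone assms by (metis subset_antisym)

text \<open>The points of gp_of I z at which A is tight form a face.\<close>

lemma tight_rel_interior:
  assumes F: "F \<subseteq> gp_of I z" and f: "f \<in> rel_interior F" and t: "tight I z f A" and g: "g \<in> F"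
  shows "tight I z g A"
proof -
  have A: "A \<subseteq> I" and zA: "z A = ereal (coord_sum A f)" using t by (auto simp: tight_def)
  define H where "H = gp_of I z \<inter> {x. indicator_vec A \<bullet> x = coord_sum A f}"
  have "indicator_vec A \<bullet> x \<le> coord_sum A f" if "x \<in> gp_of I z" for x
    using gp_ofD(3)[OF that A] zA by (simp add: coord_sum_inner)
  then have "H face_of gp_of I z"
    unfolding H_def by (intro face_of_Int_supporting_hyperplane_le polyhedron_imp_convex polyhedron_gp_of)
  moreover have "f \<in> H" using f F rel_interior_subset by (auto simp: H_def coord_sum_inner)
  ultimately have "F \<subseteq> H" using subset_of_face_of[of H "gp_of I z" F] F f by blast
  then show ?thesis using g A zA by (auto simp: H_def tight_def coord_sum_inner)
qed

lemma tight_restr_rel_interior: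
  assumes "F \<subseteq> gp_of I z" "f \<in> rel_interior F"
  shows "tight_restr I z {f} = tight_restr I z F"
  using tight_rel_interior[OF assms] rel_interior_subset assms(2)
  by (fastforce simp: tight_restr_def fun_eq_iff)

lemma some_rel_interior:
  fixes F :: "'a::euclidean_space set"
  assumes "F face_of P" "F \<noteq> {}"
  shows "(SOME f. f \<in> rel_interior F) \<in> rel_interior F"
proof -
  have "rel_interior F \<noteq> {}"
    using rel_interior_eq_empty[OF face_of_imp_convex[OF assms(1)]] assms(2) by simp
  then show ?thesis by (meson ex_in_conv someI_ex)
qed

lemma face_cone_gp_of:
  assumes sm: "ext_submodular I z" and F: "F face_of gp_of I z" "F \<noteq> {}" and f: "f \<in> rel_interior F"
  shows "face_cone (gp_of I z) F = tangent_cone (gp_of I z) f"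
proof -
  have FP: "F \<subseteq> gp_of I z" using F face_of_imp_subset by blast
  have "tangent_cone (gp_of I z) g = gp_of I (tight_restr I z F)" if "g \<in> rel_interior F" for g
  proof -
    have "g \<in> gp_of I z" using that FP rel_interior_subset by blast
    then show ?thesis using tangent_cone_gp_of[OF sm] tight_restr_rel_interior[OF FP that] by simp
  qed
  then show ?thesis unfolding face_cone_def using some_rel_interior[OF F] f by metis
qed

lemma face_cone_GP:
  assumes "P \<in> GP I" "F face_of P" "F \<noteq> {}" "f \<in> rel_interior F"
  shows "face_cone P F = tangent_cone P f"
  using assms face_cone_gp_of by (metis GP_E)

definition tight_cone :: "'e set \<Rightarrow> ('e set \<Rightarrow> ereal) \<Rightarrow> ('e::finite) pt \<Rightarrow> 'e poly" where
  "tight_cone I z f = {x \<in> RI I. coord_sum I x = 0 \<and> (\<forall>A. tight I z f A \<longrightarrow> coord_sum A x \<le> 0)}"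

lemma polyhedral_cone_tight_cone: "polyhedral_cone (tight_cone I z f)"
proof -
  have eq: "tight_cone I z f = RI I \<inter> {x. indicator_vec I \<bullet> x = 0} \<inter>
      \<Inter> ((\<lambda>A. {x. indicator_vec A \<bullet> x \<le> 0}) ` {A. tight I z f A})"
    by (auto simp: tight_cone_def coord_sum_inner)
  have "finite {A. tight I z f A}"
    by (rule finite_subset[of _ "Pow I"]) (auto simp: tight_def)
  then have "polyhedron (tight_cone I z f)"
    unfolding eq by (intro polyhedron_Int polyhedron_RI polyhedron_hyperplane polyhedron_Inter)
      (auto intro: polyhedron_halfspace_le)
  moreover have "cone (tight_cone I z f)"
    by (auto simp: cone_def tight_cone_def RI_def coord_sum_scaleR mult_nonneg_nonpos)
  ultimately show ?thesis by (simp add: polyhedral_cone_def)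
qed

lemma gp_of_tight_restr_eq_translate:
  assumes f: "f \<in> gp_of I z"
  shows "gp_of I (tight_restr I z {f}) = (\<lambda>x. f + x) ` tight_cone I z f"
proof -
  have gp: "y \<in> gp_of I (tight_restr I z {f}) \<longleftrightarrow> y - f \<in> tight_cone I z f" for y
  proof -
    have RI: "y \<in> RI I \<longleftrightarrow> y - f \<in> RI I" using gp_ofD(1)[OF f] by (auto simp: RI_def)
    have "tight_restr I z {f} I = ereal (coord_sum I f)"
      using tight_ground_set[OF f] gp_ofD(2)[OF f] by (simp add: tight_restr_def)
    then have ground: "ereal (coord_sum I y) = tight_restr I z {f} I \<longleftrightarrow> coord_sum I (y - f) = 0"
      by (simp add: coord_sum_diff)
    have "ereal (coord_sum A y) \<le> tight_restr I z {f} A \<longleftrightarrow>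
        (tight I z f A \<longrightarrow> coord_sum A (y - f) \<le> 0)" for A
    proof (cases "tight I z f A")
      case True
      then have "z A = ereal (coord_sum A f)" by (simp add: tight_def)
      with True show ?thesis by (simp add: tight_restr_def coord_sum_diff)
    qed (simp add: tight_restr_def)
    then have constraints: "(\<forall>A\<subseteq>I. ereal (coord_sum A y) \<le> tight_restr I z {f} A) \<longleftrightarrow>
        (\<forall>A. tight I z f A \<longrightarrow> coord_sum A (y - f) \<le> 0)"
      by (auto simp: tight_def)
    show ?thesis by (simp only: gp_of_eq tight_cone_def mem_Collect_eq RI ground constraints)
  qed
  have translate: "y \<in> (\<lambda>x. f + x) ` tight_cone I z f \<longleftrightarrow> y - f \<in> tight_cone I z f" for y
    by (auto simp: image_iff algebra_simps intro!: bexI[of _ "y - f"])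
  show ?thesis by (intro set_eqI) (simp only: gp translate)
qed

lemma tangent_cone_in_CGP:
  assumes sm: "ext_submodular I z" and f: "f \<in> gp_of I z"
  shows "tangent_cone (gp_of I z) f \<in> CGP I"
proof -
  have "tangent_cone (gp_of I z) f \<in> GP I"
    using tangent_cone_gp_of[OF sm f] ext_submodular_tight_restr[OF sm, of "{f}"] f
    by (auto simp: GP_def)
  then show ?thesis
    using tangent_cone_gp_of[OF sm f] gp_of_tight_restr_eq_translate[OF f]
      polyhedral_cone_tight_cone[of I z f] by (auto simp: CGP_def)
qed

lemma face_cone_in_CGP:
  assumes P: "P \<in> GP I" and F: "F face_of P" "F \<noteq> {}"
  shows "face_cone P F \<in> CGP I"
proof -
  obtain z where z: "ext_submodular I z" "P = gp_of I z" using P by (rule GP_E)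
  define f where "f = (SOME f. f \<in> rel_interior F)"
  have "f \<in> P" unfolding f_def using some_rel_interior[OF F] rel_interior_subset F face_of_imp_subset by blast
  then show ?thesis unfolding face_cone_def f_def[symmetric] using tangent_cone_in_CGP z by blast
qed

lemma face_cone_in_GP: "P \<in> GP I \<Longrightarrow> F face_of P \<Longrightarrow> F \<noteq> {} \<Longrightarrow> face_cone P F \<in> GP I"
  using face_cone_in_CGP by (auto simp: CGP_def)

section \<open>Linear extensions\<close>

definition basis_vec :: "'a \<Rightarrow> 'a \<Rightarrow> 'k::comm_ring_1" where
  "basis_vec X = (\<lambda>Y. if X = Y then 1 else 0)"

lemma supp_zero [simp]: "supp (\<lambda>_. 0 :: 'k::zero) = {}"
  by (simp add: supp_def)

lemma finite_supp_basis_vec: "finite (supp (basis_vec X :: 'a \<Rightarrow> 'k::comm_ring_1))"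
  by (rule finite_subset[of _ "{X}"]) (auto simp: supp_def basis_vec_def)

lemma lin_ext_cong: "(\<And>P. P \<in> supp c \<Longrightarrow> f P = g P) \<Longrightarrow> lin_ext f c = lin_ext g c"
  by (simp add: lin_ext_def)

lemma lin_ext_zero [simp]: "lin_ext f (\<lambda>_. 0) = (\<lambda>_. 0)"
  by (simp add: lin_ext_def)

lemma lin_ext_superset:
  assumes "finite K" "supp c \<subseteq> K"
  shows "lin_ext f c Q = (\<Sum>P\<in>K. c P * f P Q)"
  unfolding lin_ext_def by (rule sum.mono_neutral_left) (use assms in \<open>auto simp: supp_def\<close>)

lemma lin_ext_basis_vec: "lin_ext f (basis_vec X) = f X"
  by (rule ext) (subst lin_ext_superset[of "{X}"], auto simp: supp_def basis_vec_def)

lemma supp_lin_ext: "supp (lin_ext f c) \<subseteq> (\<Union>P\<in>supp c. supp (f P))"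
proof
  fix Q assume "Q \<in> supp (lin_ext f c)"
  then have "(\<Sum>P\<in>supp c. c P * f P Q) \<noteq> 0" by (simp add: supp_def lin_ext_def)
  then obtain P where "P \<in> supp c" "c P * f P Q \<noteq> 0" by (meson sum.neutral)
  then show "Q \<in> (\<Union>P\<in>supp c. supp (f P))" by (auto simp: supp_def)
qed

lemma finite_supp_lin_ext:
  "finite (supp c) \<Longrightarrow> (\<And>P. P \<in> supp c \<Longrightarrow> finite (supp (f P))) \<Longrightarrow> finite (supp (lin_ext f c))"
  by (rule finite_subset[OF supp_lin_ext]) auto

lemma lin_ext_lin_ext:
  assumes "finite (supp c)" "\<And>P. P \<in> supp c \<Longrightarrow> finite (supp (f P))"
  shows "lin_ext g (lin_ext f c) = lin_ext (\<lambda>P. lin_ext g (f P)) c"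
proof
  fix R
  define K where "K = (\<Union>P\<in>supp c. supp (f P))"
  have K: "finite K" "supp (lin_ext f c) \<subseteq> K" "\<And>P. P \<in> supp c \<Longrightarrow> supp (f P) \<subseteq> K"
    using assms supp_lin_ext[of f c] by (auto simp: K_def)
  have "lin_ext g (lin_ext f c) R = (\<Sum>X\<in>K. (\<Sum>P\<in>supp c. c P * f P X) * g X R)"
    by (simp only: lin_ext_superset[OF K(1,2)]) (simp add: lin_ext_def)
  also have "\<dots> = (\<Sum>P\<in>supp c. c P * (\<Sum>X\<in>K. f P X * g X R))"
    unfolding sum_distrib_left sum_distrib_right mult.assoc by (rule sum.swap)
  also have "\<dots> = lin_ext (\<lambda>P. lin_ext g (f P)) c R"
    by (simp add: lin_ext_def[of "\<lambda>P. lin_ext g (f P)"] lin_ext_superset[OF K(1) K(3)])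
  finally show "lin_ext g (lin_ext f c) R = lin_ext (\<lambda>P. lin_ext g (f P)) c R" .
qed

lemma lin_ext_swap:
  "lin_ext (\<lambda>C. lin_ext (\<lambda>Q. F C Q) b) u = lin_ext (\<lambda>Q. lin_ext (\<lambda>C. F C Q) u) b"
proof
  fix R
  show "lin_ext (\<lambda>C. lin_ext (\<lambda>Q. F C Q) b) u R = lin_ext (\<lambda>Q. lin_ext (\<lambda>C. F C Q) u) b R"
    unfolding lin_ext_def sum_distrib_left by (subst sum.swap) (simp add: mult.left_commute)
qed

lemma mult_eq_lin_ext: "mult S a b = lin_ext (\<lambda>P. lin_ext (\<lambda>Q. basis_vec (poly_prod S P Q)) b) a"
  by (rule ext) (auto simp: mult_def lin_ext_def basis_vec_def sum_distrib_left intro!: sum.cong)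

lemma mult_basis_vec: "mult S (basis_vec C) (basis_vec D) = basis_vec (poly_prod S C D)"
  by (simp add: mult_eq_lin_ext lin_ext_basis_vec)

lemma lin_ext_mult:
  fixes a b :: "('e::finite) poly \<Rightarrow> 'k::comm_ring_1"
  assumes "finite (supp a)" "finite (supp b)"
  shows "lin_ext h (mult S a b) = lin_ext (\<lambda>P. lin_ext (\<lambda>Q. h (poly_prod S P Q)) b) a"
proof -
  have "finite (supp (lin_ext (\<lambda>Q. basis_vec (poly_prod S P Q)) b :: _ \<Rightarrow> 'k))" for P
    by (intro finite_supp_lin_ext assms(2) finite_supp_basis_vec)
  then have "lin_ext h (mult S a b)
      = lin_ext (\<lambda>P. lin_ext h (lin_ext (\<lambda>Q. basis_vec (poly_prod S P Q)) b)) a"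
    unfolding mult_eq_lin_ext by (rule lin_ext_lin_ext[OF assms(1)])
  also have "\<dots> = lin_ext (\<lambda>P. lin_ext (\<lambda>Q. h (poly_prod S P Q)) b) a"
    by (rule lin_ext_cong, subst lin_ext_lin_ext)
      (simp_all add: assms(2) finite_supp_basis_vec lin_ext_basis_vec)
  finally show ?thesis .
qed

lemma mult_lin_ext:
  assumes a: "finite (supp a)" "\<And>P. P \<in> supp a \<Longrightarrow> finite (supp (f P))"
    and b: "finite (supp b)" "\<And>Q. Q \<in> supp b \<Longrightarrow> finite (supp (g Q))"
  shows "mult S (lin_ext f a) (lin_ext g b) = lin_ext (\<lambda>P. lin_ext (\<lambda>Q. mult S (f P) (g Q)) b) a"
proof -
  let ?\<delta> = "\<lambda>C D. basis_vec (poly_prod S C D)"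
  have "mult S (lin_ext f a) (lin_ext g b)
      = lin_ext (\<lambda>P. lin_ext (\<lambda>C. lin_ext (?\<delta> C) (lin_ext g b)) (f P)) a"
    unfolding mult_eq_lin_ext using a by (rule lin_ext_lin_ext)
  also have "\<dots> = lin_ext (\<lambda>P. lin_ext (\<lambda>C. lin_ext (\<lambda>Q. lin_ext (?\<delta> C) (g Q)) b) (f P)) a"
    by (rule lin_ext_cong, rule lin_ext_cong, rule lin_ext_lin_ext[OF b])
  also have "\<dots> = lin_ext (\<lambda>P. lin_ext (\<lambda>Q. lin_ext (\<lambda>C. lin_ext (?\<delta> C) (g Q)) (f P)) b) a"
    by (rule lin_ext_cong, rule lin_ext_swap)
  also have "\<dots> = lin_ext (\<lambda>P. lin_ext (\<lambda>Q. mult S (f P) (g Q)) b) a"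
    by (simp only: mult_eq_lin_ext)
  finally show ?thesis .
qed

lemma comult_eq_lin_ext:
  "comult S T a = lin_ext (\<lambda>P. if bounded_above_on S P
      then basis_vec (restr S (max_face S P), restr T (max_face S P)) else (\<lambda>_. 0)) a"
  by (rule ext) (auto simp: comult_def lin_ext_def basis_vec_def intro!: sum.cong)

lemma comult_lin_ext:
  "finite (supp a) \<Longrightarrow> (\<And>P. P \<in> supp a \<Longrightarrow> finite (supp (f P))) \<Longrightarrow>
    comult S T (lin_ext f a) = lin_ext (\<lambda>P. comult S T (f P)) a"
  unfolding comult_eq_lin_ext by (rule lin_ext_lin_ext)

lemma comult_basis_vec:
  "comult S T (basis_vec C) = (if bounded_above_on S C
    then basis_vec (restr S (max_face S C), restr T (max_face S C)) else (\<lambda>_. 0))"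
  by (simp add: comult_eq_lin_ext lin_ext_basis_vec)

lemma tensor_ext_comult:
  assumes "finite (supp a)"
  shows "tensor_ext f g (comult S T a) = lin_ext (\<lambda>P. if bounded_above_on S P
      then (\<lambda>(R1, R2). f (restr S (max_face S P)) R1 * g (restr T (max_face S P)) R2) else (\<lambda>_. 0)) a"
proof -
  have tensor: "tensor_ext f g c = lin_ext (\<lambda>(P, Q) (R1, R2). f P R1 * g Q R2) c" for c
    by (auto simp: tensor_ext_def lin_ext_def mult.assoc fun_eq_iff case_prod_unfold)
  then show ?thesis
    unfolding tensor comult_eq_lin_ext
    by (subst lin_ext_lin_ext[OF assms]) (auto simp: finite_supp_basis_vec lin_ext_basis_vec intro!: lin_ext_cong)
qed

lemma relabel_eq_lin_ext: "relabel \<sigma> c = lin_ext (\<lambda>P. basis_vec (relabel_pt \<sigma> ` P)) c"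
  by (rule ext) (auto simp: relabel_def lin_ext_def basis_vec_def intro!: sum.cong)

lemma counit_superset: "finite K \<Longrightarrow> supp c \<subseteq> K \<Longrightarrow> counit c = (\<Sum>P\<in>K. c P)"
  unfolding counit_def by (rule sum.mono_neutral_left) (auto simp: supp_def)

section \<open>bg on basis elements\<close>

definition bounded_mod_lineality :: "('e::finite) poly \<Rightarrow> 'e poly \<Rightarrow> bool" where
  "bounded_mod_lineality P F \<longleftrightarrow> (\<exists>B. bounded B \<and> F \<subseteq> {b + l | b l. b \<in> B \<and> l \<in> lineality P})"

lemma rel_bounded_face_eq: "rel_bounded_face P F \<longleftrightarrow> F face_of P \<and> bounded_mod_lineality P F"
  by (simp add: rel_bounded_face_def bounded_mod_lineality_def)

definition rb_faces :: "('e::finite) poly \<Rightarrow> 'e poly set" where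
  "rb_faces P = {F. F face_of P \<and> F \<noteq> {} \<and> rel_bounded_face P F}"

definition face_sign :: "('e::finite) poly \<Rightarrow> 'e poly \<Rightarrow> 'k::comm_ring_1" where
  "face_sign P F = (if F \<in> rb_faces P then (-1) ^ dimension F else 0)"

lemma finite_rb_faces: "P \<in> GP I \<Longrightarrow> finite (rb_faces P)"
  using finite_faces_GP[of P I] by (rule rev_finite_subset) (auto simp: rb_faces_def)

lemma finite_supp_face_sign: "finite (rb_faces P) \<Longrightarrow> finite (supp (face_sign P :: _ \<Rightarrow> 'k::comm_ring_1))"
  by (rule finite_subset[of _ "rb_faces P"]) (auto simp: supp_def face_sign_def)

lemma lin_ext_face_sign:
  assumes "finite (rb_faces P)"
  shows "lin_ext g (face_sign P) R = (\<Sum>F\<in>rb_faces P. (-1) ^ dimension F * g F R)"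
  by (subst lin_ext_superset[OF assms]) (auto simp: supp_def face_sign_def intro!: sum.cong)

lemma bg_basis_eq_lin_ext:
  assumes "finite (rb_faces P)"
  shows "bg_basis P = lin_ext (\<lambda>F. basis_vec (face_cone P F)) (face_sign P)"
proof
  fix R
  have "{F. F face_of P \<and> F \<noteq> {} \<and> rel_bounded_face P F \<and> face_cone P F = R}
      = {F \<in> rb_faces P. face_cone P F = R}"
    by (auto simp: rb_faces_def)
  then show "bg_basis P R = lin_ext (\<lambda>F. basis_vec (face_cone P F)) (face_sign P) R"
    using assms
    by (auto simp: bg_basis_def lin_ext_face_sign basis_vec_def sum.inter_filter intro!: sum.cong)
qed

lemma supp_bg_basis: "supp (bg_basis P :: _ \<Rightarrow> 'k::comm_ring_1) \<subseteq> face_cone P ` rb_faces P"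
proof
  fix Q assume "Q \<in> supp (bg_basis P :: _ \<Rightarrow> 'k)"
  then have "(bg_basis P Q :: 'k) \<noteq> 0" by (simp add: supp_def)
  then have "{F. F face_of P \<and> F \<noteq> {} \<and> rel_bounded_face P F \<and> face_cone P F = Q} \<noteq> {}"
    unfolding bg_basis_def by (metis sum.empty)
  then show "Q \<in> face_cone P ` rb_faces P" by (auto simp: rb_faces_def)
qed

lemma finite_supp_bg_basis: "P \<in> GP I \<Longrightarrow> finite (supp (bg_basis P :: _ \<Rightarrow> 'k::comm_ring_1))"
  using supp_bg_basis finite_rb_faces by (metis finite_imageI finite_subset)

lemma bg_span_CGP:
  fixes c :: "('e::finite) poly \<Rightarrow> 'k::comm_ring_1"
  assumes "c \<in> span_of (GP I)"
  shows "bg c \<in> span_of (CGP I)"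
proof -
  have sub: "supp c \<subseteq> GP I" and fin: "finite (supp c)" using assms by (auto simp: span_of_def)
  let ?C = "\<Union>P\<in>supp c. face_cone P ` rb_faces P"
  have "supp (bg c) \<subseteq> (\<Union>P\<in>supp c. supp (bg_basis P :: _ \<Rightarrow> 'k))"
    unfolding bg_def by (rule supp_lin_ext)
  also have "\<dots> \<subseteq> ?C" using supp_bg_basis by (intro UN_mono) auto
  finally have "supp (bg c) \<subseteq> ?C" .
  moreover have "finite ?C"
    using sub finite_rb_faces by (intro finite_UN_I fin finite_imageI) blast
  moreover have "?C \<subseteq> CGP I" using sub face_cone_in_CGP by (auto simp: rb_faces_def)
  ultimately show ?thesis unfolding span_of_def using finite_subset by blast
qed

lemma finite_supp_bg: "c \<in> span_of (GP I) \<Longrightarrow> finite (supp (bg c))"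
  using bg_span_CGP[of c I] by (simp add: span_of_def)

lemma tangent_cone_singleton: "tangent_cone {a} a = {a}"
proof
  have "x = 0" if "0 < e" "\<forall>\<epsilon>. 0 < \<epsilon> \<and> \<epsilon> < e \<longrightarrow> a + \<epsilon> *\<^sub>R x = a" for x e
  proof -
    have "a + (e/2) *\<^sub>R x = a" using that(2)[rule_format, of "e/2"] that(1) by simp
    then show ?thesis using \<open>0 < e\<close> by simp
  qed
  then show "tangent_cone {a} a \<subseteq> {a}" by (auto simp: tangent_cone_def)
  have "a \<in> tangent_cone {a} a"
    unfolding tangent_cone_def by (rule CollectI, rule exI[of _ 0]) (auto intro!: exI[of _ 1])
  then show "{a} \<subseteq> tangent_cone {a} a" by simp
qed

lemma face_of_singleton_iff: "F face_of {a} \<longleftrightarrow> F = {} \<or> F = {a}"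
  by (metis convex_singleton empty_face_of face_of_imp_subset face_of_refl subset_singletonD)

lemma bg_basis_point: "bg_basis {0::('e::finite) pt} = basis_vec {0}"
proof -
  have "rel_bounded_face {0::'e pt} {0}"
    unfolding rel_bounded_face_def using face_of_singleton_iff
    by (intro conjI exI[of _ "{0}"]) (auto simp: lineality_def intro!: exI[of _ 0])
  then have rb: "rb_faces {0::'e pt} = {{0}}" by (auto simp: rb_faces_def face_of_singleton_iff)
  have "face_cone {0::'e pt} {0} = {0}" by (simp add: face_cone_def tangent_cone_singleton)
  then show ?thesis
    by (simp add: bg_basis_eq_lin_ext rb lin_ext_face_sign fun_eq_iff dimension_def)
qed

lemma unit_elt_eq_basis_vec: "unit_elt = basis_vec {0}"
  by (auto simp: unit_elt_def basis_vec_def RI_empty)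

lemma bg_unit: "bg unit_elt = unit_elt"
  by (simp add: unit_elt_eq_basis_vec bg_def lin_ext_basis_vec bg_basis_point)

lemma counit_bg:
  fixes c :: "('e::finite) poly \<Rightarrow> 'k::comm_ring_1"
  assumes "c \<in> span_of (GP {})"
  shows "counit (bg c) = counit c"
proof -
  have c: "supp c \<subseteq> {{0}}" using assms by (simp add: span_of_def GP_empty)
  have bg: "bg c R = c {0} * basis_vec {0} R" for R
    unfolding bg_def by (simp add: lin_ext_superset[OF _ c] bg_basis_point)
  then have "supp (bg c) \<subseteq> {{0}}" by (auto simp: supp_def basis_vec_def)
  from counit_superset[OF _ this] have "counit (bg c) = c {0}" by (simp add: bg basis_vec_def)
  also have "\<dots> = counit c" by (simp add: counit_superset[OF _ c])
  finally show ?thesis .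
qed

section \<open>Invariance under linear automorphisms\<close>

context
  fixes h h' :: "('e::finite) pt \<Rightarrow> 'e pt"
  assumes linear_h: "linear h" and linear_h': "linear h'"
    and h'_h: "\<And>x. h' (h x) = x" and h_h': "\<And>x. h (h' x) = x"
begin

lemma inj_h: "inj h"
  by (metis h'_h injI)

lemma image_eq_iff_inverse: "h ` A = B \<longleftrightarrow> A = h' ` B"
proof -
  have "h' ` h ` A = A" "h ` h' ` B = B" by (simp_all add: image_comp h'_h h_h')
  then show ?thesis by blast
qed

lemma tangent_cone_linear_image: "tangent_cone (h ` P) (h f) = h ` tangent_cone P f"
proof
  have step: "h f + \<epsilon> *\<^sub>R h x = h (f + \<epsilon> *\<^sub>R x)" for \<epsilon> x
    by (simp add: linear_add[OF linear_h] linear_scale[OF linear_h])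
  show "tangent_cone (h ` P) (h f) \<subseteq> h ` tangent_cone P f"
  proof
    fix y assume "y \<in> tangent_cone (h ` P) (h f)"
    then obtain x e where y: "y = h f + x" and e: "e > 0"
      and ex: "\<forall>\<epsilon>. 0 < \<epsilon> \<and> \<epsilon> < e \<longrightarrow> h f + \<epsilon> *\<^sub>R x \<in> h ` P"
      unfolding tangent_cone_def by blast
    have "h f + \<epsilon> *\<^sub>R x = h (f + \<epsilon> *\<^sub>R h' x)" for \<epsilon>
      using step[of \<epsilon> "h' x"] by (simp add: h_h')
    then have "\<forall>\<epsilon>. 0 < \<epsilon> \<and> \<epsilon> < e \<longrightarrow> f + \<epsilon> *\<^sub>R h' x \<in> P"
      using ex by (simp add: inj_image_mem_iff[OF inj_h])
    then have "f + h' x \<in> tangent_cone P f" unfolding tangent_cone_def using e by blast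
    moreover have "y = h (f + h' x)" using y by (simp add: linear_add[OF linear_h] h_h')
    ultimately show "y \<in> h ` tangent_cone P f" by blast
  qed
  show "h ` tangent_cone P f \<subseteq> tangent_cone (h ` P) (h f)"
  proof
    fix y assume "y \<in> h ` tangent_cone P f"
    then obtain x e where y: "y = h (f + x)" and e: "e > 0"
      and ex: "\<forall>\<epsilon>. 0 < \<epsilon> \<and> \<epsilon> < e \<longrightarrow> f + \<epsilon> *\<^sub>R x \<in> P"
      unfolding tangent_cone_def by blast
    have "\<forall>\<epsilon>. 0 < \<epsilon> \<and> \<epsilon> < e \<longrightarrow> h f + \<epsilon> *\<^sub>R h x \<in> h ` P"
      using ex by (simp add: step)
    moreover have "y = h f + h x" using y by (simp add: linear_add[OF linear_h])
    ultimately show "y \<in> tangent_cone (h ` P) (h f)" unfolding tangent_cone_def using e by blast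
  qed
qed

lemma lineality_linear_image: "lineality (h ` P) = h ` lineality P"
proof -
  have "d \<in> lineality (h ` P) \<longleftrightarrow> h' d \<in> lineality P" for d
  proof -
    have "h x + t *\<^sub>R d = h (x + t *\<^sub>R h' d)" for x t
      by (simp add: linear_add[OF linear_h] linear_scale[OF linear_h] h_h')
    then show ?thesis by (auto simp: lineality_def inj_image_mem_iff[OF inj_h])
  qed
  moreover have "d \<in> h ` X \<longleftrightarrow> h' d \<in> X" for d X
    by (metis h_h' inj_image_mem_iff[OF inj_h])
  ultimately show ?thesis by blast
qed

lemma rel_bounded_face_linear_image: "rel_bounded_face (h ` P) (h ` F) \<longleftrightarrow> rel_bounded_face P F"
proof -
  have bl: "bounded_linear h" "bounded_linear h'"
    using linear_h linear_h' linear_conv_bounded_linear by auto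
  let ?S = "\<lambda>B Q. {b + l | b l. b \<in> B \<and> l \<in> lineality Q}"
  have img: "?S (h ` B) (h ` P) = h ` ?S B P" for B
  proof (intro set_eqI iffI)
    fix y assume "y \<in> ?S (h ` B) (h ` P)"
    then obtain b l where "b \<in> B" "l \<in> lineality P" "y = h b + h l"
      by (auto simp: lineality_linear_image)
    moreover from this have "y = h (b + l)" by (simp add: linear_add[OF linear_h])
    ultimately show "y \<in> h ` ?S B P" by blast
  next
    fix y assume "y \<in> h ` ?S B P"
    then obtain b l where "b \<in> B" "l \<in> lineality P" "y = h b + h l"
      by (auto simp: linear_add[OF linear_h])
    then show "y \<in> ?S (h ` B) (h ` P)" unfolding lineality_linear_image by blast
  qed
  have hh': "h ` h' ` B = B" for B by (simp add: image_comp comp_def h_h')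
  have "(\<exists>B. bounded B \<and> h ` F \<subseteq> ?S B (h ` P)) \<longleftrightarrow> (\<exists>B. bounded B \<and> F \<subseteq> ?S B P)"
  proof
    assume "\<exists>B. bounded B \<and> h ` F \<subseteq> ?S B (h ` P)"
    then obtain B where B: "bounded B" "h ` F \<subseteq> ?S B (h ` P)" by blast
    then have "h ` F \<subseteq> h ` ?S (h' ` B) P" using img[of "h' ` B"] by (simp add: hh')
    then have "F \<subseteq> ?S (h' ` B) P" by (simp add: inj_image_subset_iff[OF inj_h])
    moreover have "bounded (h' ` B)" using B(1) bounded_linear_image[OF _ bl(2)] by blast
    ultimately show "\<exists>B. bounded B \<and> F \<subseteq> ?S B P" by blast
  next
    assume "\<exists>B. bounded B \<and> F \<subseteq> ?S B P"
    then obtain B where B: "bounded B" "F \<subseteq> ?S B P" by blast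
    have "h ` F \<subseteq> ?S (h ` B) (h ` P)" unfolding img using B(2) by (rule image_mono)
    moreover have "bounded (h ` B)" using B(1) bounded_linear_image[OF _ bl(1)] by blast
    ultimately show "\<exists>B. bounded B \<and> h ` F \<subseteq> ?S B (h ` P)" by blast
  qed
  then show ?thesis
    unfolding rel_bounded_face_def using face_of_linear_image[OF linear_h inj_h] by blast
qed

lemma rb_faces_linear_image: "rb_faces (h ` P) = image h ` rb_faces P"
proof -
  have "F' face_of h ` P \<longleftrightarrow> (\<exists>F. F face_of P \<and> F' = h ` F)" for F'
    using faces_of_linear_image[OF linear_h inj_h, of P] by blast
  then show ?thesis
    unfolding rb_faces_def using rel_bounded_face_linear_image by (auto simp: image_iff)
qed

lemma face_cone_linear_image:
  assumes P: "P \<in> GP I" and F: "F face_of P" "F \<noteq> {}"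
  shows "face_cone (h ` P) (h ` F) = h ` face_cone P F"
proof -
  have "h ` F face_of h ` P" using F face_of_linear_image[OF linear_h inj_h] by blast
  then have "(SOME g. g \<in> rel_interior (h ` F)) \<in> rel_interior (h ` F)"
    using some_rel_interior F(2) by blast
  moreover have "rel_interior (h ` F) = h ` rel_interior F"
    using rel_interior_injective_linear_image[OF _ inj_h] linear_h linear_conv_bounded_linear by blast
  ultimately obtain f where f: "f \<in> rel_interior F" "(SOME g. g \<in> rel_interior (h ` F)) = h f" by blast
  have "face_cone (h ` P) (h ` F) = h ` tangent_cone P f"
    unfolding face_cone_def f(2) by (rule tangent_cone_linear_image)
  also have "tangent_cone P f = face_cone P F" using face_cone_GP[OF P F f(1)] by simp
  finally show ?thesis .
qed

lemma bg_basis_linear_image: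
  assumes P: "P \<in> GP I"
  shows "bg_basis (h ` P) = (\<lambda>R. bg_basis P (h' ` R))"
proof
  fix R
  have fin: "finite (rb_faces P)" using finite_rb_faces[OF P] .
  then have fin': "finite (rb_faces (h ` P))" by (simp add: rb_faces_linear_image)
  have inj: "inj_on (image h) X" for X using inj_h by (meson inj_image_eq_iff inj_onI)
  have "bg_basis (h ` P) R = (\<Sum>F\<in>rb_faces P. (-1) ^ dimension (h ` F) * basis_vec (face_cone (h ` P) (h ` F)) R)"
    by (simp add: bg_basis_eq_lin_ext[OF fin'] lin_ext_face_sign[OF fin'] rb_faces_linear_image
        sum.reindex[OF inj])
  also have "\<dots> = (\<Sum>F\<in>rb_faces P. (-1) ^ dimension F * basis_vec (face_cone P F) (h' ` R))"
  proof (intro sum.cong refl)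
    fix F assume "F \<in> rb_faces P"
    then have "face_cone (h ` P) (h ` F) = h ` face_cone P F"
      using face_cone_linear_image[OF P] by (simp add: rb_faces_def)
    then show "(-1) ^ dimension (h ` F) * basis_vec (face_cone (h ` P) (h ` F)) R =
        (-1) ^ dimension F * basis_vec (face_cone P F) (h' ` R)"
      by (simp add: basis_vec_def image_eq_iff_inverse dimension_def
          aff_dim_injective_linear_image[OF linear_h inj_h])
  qed
  also have "\<dots> = bg_basis P (h' ` R)"
    by (simp add: bg_basis_eq_lin_ext[OF fin] lin_ext_face_sign[OF fin])
  finally show "bg_basis (h ` P) R = bg_basis P (h' ` R)" .
qed

lemma lin_ext_basis_vec_image:
  "finite (supp c) \<Longrightarrow> lin_ext (\<lambda>P. basis_vec (h ` P)) c = (\<lambda>Q. c (h' ` Q))"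
  by (auto simp: lin_ext_def basis_vec_def image_eq_iff_inverse supp_def sum.delta' fun_eq_iff
      if_distrib[of "\<lambda>x. _ * x"] cong: if_cong)

lemma bg_linear_image:
  fixes c :: "('e::finite) poly \<Rightarrow> 'k::comm_ring_1"
  assumes c: "c \<in> span_of (GP I)"
  shows "bg (lin_ext (\<lambda>P. basis_vec (h ` P)) c) = lin_ext (\<lambda>P. basis_vec (h ` P)) (bg c)"
proof -
  have fin: "finite (supp c)" and sub: "supp c \<subseteq> GP I" using c by (auto simp: span_of_def)
  have "bg (lin_ext (\<lambda>P. basis_vec (h ` P)) c) = lin_ext (\<lambda>P. bg_basis (h ` P)) c"
    unfolding bg_def by (simp add: lin_ext_lin_ext[OF fin] finite_supp_basis_vec lin_ext_basis_vec)
  also have "\<dots> = lin_ext (\<lambda>P R. bg_basis P (h' ` R)) c"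
    using sub by (intro lin_ext_cong) (auto simp: bg_basis_linear_image)
  also have "\<dots> = lin_ext (\<lambda>P. basis_vec (h ` P)) (bg c)"
    by (simp add: lin_ext_basis_vec_image finite_supp_bg[OF c]) (simp add: bg_def lin_ext_def)
  finally show ?thesis .
qed

end

lemma bg_relabel:
  fixes c :: "('e::finite) poly \<Rightarrow> 'k::comm_ring_1"
  assumes \<sigma>: "bij \<sigma>" and c: "c \<in> span_of (GP I)"
  shows "bg (relabel \<sigma> c) = relabel \<sigma> (bg c)"
proof -
  have "linear (relabel_pt \<tau> :: 'e pt \<Rightarrow> _)" for \<tau>
    by (rule linearI) (auto simp: relabel_pt_def vec_eq_iff)
  moreover have "relabel_pt (inv \<sigma>) (relabel_pt \<sigma> x) = x" "relabel_pt \<sigma> (relabel_pt (inv \<sigma>) x) = x"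
    for x :: "'e pt"
    using \<sigma> by (auto simp: relabel_pt_def vec_eq_iff bij_def inv_inv_eq surj_f_inv_f)
  ultimately show ?thesis
    unfolding relabel_eq_lin_ext using bg_linear_image[OF _ _ _ _ c] by blast
qed

section \<open>Products\<close>

definition minkowski_sum :: "('e::finite) poly \<Rightarrow> 'e poly \<Rightarrow> 'e poly" where
  "minkowski_sum A B = {p + q | p q. p \<in> A \<and> q \<in> B}"

definition coord_proj :: "'e set \<Rightarrow> ('e::finite) pt \<Rightarrow> 'e pt" where
  "coord_proj S x = (\<chi> i. if i \<in> S then x $ i else 0)"

lemma linear_coord_proj: "linear (coord_proj S)"
  by (rule linearI) (auto simp: coord_proj_def vec_eq_iff)

lemma bounded_linear_coord_proj: "bounded_linear (coord_proj S)"
  using linear_coord_proj linear_conv_bounded_linear by blast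

lemma coord_proj_add: "coord_proj S (x + y) = coord_proj S x + coord_proj S y"
  by (simp add: coord_proj_def vec_eq_iff)

lemma coord_proj_scaleR: "coord_proj S (c *\<^sub>R x) = c *\<^sub>R coord_proj S x"
  by (simp add: coord_proj_def vec_eq_iff)

lemma coord_proj_RI: "coord_proj S x \<in> RI S"
  by (simp add: coord_proj_def RI_def)

lemma coord_proj_id: "x \<in> RI S \<Longrightarrow> coord_proj S x = x"
  by (auto simp: coord_proj_def RI_def vec_eq_iff)

lemma coord_proj_disjoint: "S \<inter> T = {} \<Longrightarrow> x \<in> RI T \<Longrightarrow> coord_proj S x = 0"
  by (auto simp: coord_proj_def RI_def vec_eq_iff)

lemma restr_eq_image: "restr S F = coord_proj S ` F"
  by (simp add: restr_def coord_proj_def)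

lemma convex_minkowski_sum: "convex A \<Longrightarrow> convex B \<Longrightarrow> convex (minkowski_sum A B)"
proof -
  assume "convex A" "convex B"
  then have "convex (\<Union>x\<in> A. \<Union>y \<in> B. {x + y})" by (rule convex_sums)
  moreover have "(\<Union>x\<in> A. \<Union>y \<in> B. {x + y}) = minkowski_sum A B" by (auto simp: minkowski_sum_def)
  ultimately show ?thesis by simp
qed

lemma span_Times_zero:
  fixes X :: "'a::euclidean_space set" and Y :: "'b::euclidean_space set"
  assumes "0 \<in> X" "0 \<in> Y"
  shows "span (X \<times> Y) = span X \<times> span Y"
proof
  show "span (X \<times> Y) \<subseteq> span X \<times> span Y"
    by (intro span_minimal subspace_Times subspace_span) (auto intro: span_base)
  show "span X \<times> span Y \<subseteq> span (X \<times> Y)"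
  proof
    fix x assume "x \<in> span X \<times> span Y"
    then obtain u v where uv: "u \<in> span X" "v \<in> span Y" "x = (u, v)" by blast
    have l1: "linear (\<lambda>x::'a. (x, 0::'b))" by (rule linearI) auto
    have l2: "linear (\<lambda>x::'b. (0::'a, x))" by (rule linearI) auto
    have "(u, 0) \<in> span ((\<lambda>x. (x, 0::'b)) ` X)" using uv span_linear_image[OF l1, of X] by auto
    moreover have "(\<lambda>x. (x, 0::'b)) ` X \<subseteq> X \<times> Y" using assms by auto
    ultimately have 1: "(u, 0) \<in> span (X \<times> Y)" by (meson span_mono subsetD)
    have "(0, v) \<in> span ((\<lambda>x. (0::'a, x)) ` Y)" using uv span_linear_image[OF l2, of Y] by auto
    moreover have "(\<lambda>x. (0::'a, x)) ` Y \<subseteq> X \<times> Y" using assms by auto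
    ultimately have 2: "(0, v) \<in> span (X \<times> Y)" by (meson span_mono subsetD)
    have "x = (u, 0) + (0, v)" using uv by simp
    then show "x \<in> span (X \<times> Y)" using 1 2 span_add by metis
  qed
qed

lemma aff_dim_Times:
  fixes X :: "'a::euclidean_space set" and Y :: "'b::euclidean_space set"
  assumes "X \<noteq> {}" "Y \<noteq> {}"
  shows "aff_dim (X \<times> Y) = aff_dim X + aff_dim Y"
proof -
  obtain a b where ab: "a \<in> X" "b \<in> Y" using assms by blast
  define X' where "X' = (+) (-a) ` X"
  define Y' where "Y' = (+) (-b) ` Y"
  have 0: "0 \<in> X'" "0 \<in> Y'" using ab by (auto simp: X'_def Y'_def image_iff intro!: bexI[of _ a] bexI[of _ b])
  have "aff_dim X = int (dim X')" unfolding X'_def by (rule aff_dim_eq_dim) (use ab in \<open>auto intro: hull_inc\<close>)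
  moreover have "aff_dim Y = int (dim Y')" unfolding Y'_def by (rule aff_dim_eq_dim) (use ab in \<open>auto intro: hull_inc\<close>)
  moreover have "aff_dim (X \<times> Y) = int (dim ((+) (- (a, b)) ` (X \<times> Y)))"
    by (rule aff_dim_eq_dim) (use ab in \<open>auto intro: hull_inc\<close>)
  moreover have "(+) (- (a, b)) ` (X \<times> Y) = X' \<times> Y'"
    by (auto simp: X'_def Y'_def image_iff)
  moreover have "dim (X' \<times> Y') = dim X' + dim Y'"
  proof -
    have "dim (X' \<times> Y') = dim (span (X' \<times> Y'))" by simp
    also have "\<dots> = dim (span X' \<times> span Y')" using span_Times_zero[OF 0] by simp
    also have "\<dots> = dim (span X') + dim (span Y')" by (rule dim_Times) auto
    finally show ?thesis by simp
  qed
  ultimately show ?thesis by simp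
qed

lemma lineality_minkowski_sum_add:
  assumes d: "d1 \<in> lineality A" "d2 \<in> lineality B"
  shows "d1 + d2 \<in> lineality (minkowski_sum A B)"
  unfolding lineality_def
proof (intro CollectI ballI allI)
  fix x t assume "x \<in> minkowski_sum A B"
  then obtain p q where pq: "p \<in> A" "q \<in> B" "x = p + q" by (auto simp: minkowski_sum_def)
  have "p + t *\<^sub>R d1 \<in> A" "q + t *\<^sub>R d2 \<in> B" using d pq by (auto simp: lineality_def)
  moreover have "x + t *\<^sub>R (d1 + d2) = (p + t *\<^sub>R d1) + (q + t *\<^sub>R d2)"
    using pq by (simp add: algebra_simps)
  ultimately show "x + t *\<^sub>R (d1 + d2) \<in> minkowski_sum A B" unfolding minkowski_sum_def by blast
qed

lemma bounded_mod_lineality_minkowski_sum: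
  assumes "bounded_mod_lineality P F" "bounded_mod_lineality Q G"
  shows "bounded_mod_lineality (minkowski_sum P Q) (minkowski_sum F G)"
proof -
  obtain B1 B2 where B1: "bounded B1" "F \<subseteq> {b + l | b l. b \<in> B1 \<and> l \<in> lineality P}"
    and B2: "bounded B2" "G \<subseteq> {b + l | b l. b \<in> B2 \<and> l \<in> lineality Q}"
    using assms by (auto simp: bounded_mod_lineality_def)
  have "bounded (\<Union>x\<in> B1. \<Union>y \<in> B2. {x + y})" using B1 B2 bounded_sums by blast
  moreover have "minkowski_sum F G \<subseteq> {b + l | b l. b \<in> (\<Union>x\<in> B1. \<Union>y \<in> B2. {x + y}) \<and> l \<in> lineality (minkowski_sum P Q)}"
  proof
    fix x assume "x \<in> minkowski_sum F G"
    then obtain f g where fg: "f \<in> F" "g \<in> G" "x = f + g" by (auto simp: minkowski_sum_def)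
    obtain b1 l1 where 1: "b1 \<in> B1" "l1 \<in> lineality P" "f = b1 + l1" using B1 fg by blast
    obtain b2 l2 where 2: "b2 \<in> B2" "l2 \<in> lineality Q" "g = b2 + l2" using B2 fg by blast
    have "x = (b1 + b2) + (l1 + l2)" using fg 1 2 by (simp add: algebra_simps)
    moreover have "l1 + l2 \<in> lineality (minkowski_sum P Q)" using lineality_minkowski_sum_add 1 2 by blast
    moreover have "b1 + b2 \<in> (\<Union>x\<in> B1. \<Union>y \<in> B2. {x + y})" using 1 2 by blast
    ultimately show "x \<in> {b + l | b l. b \<in> (\<Union>x\<in> B1. \<Union>y \<in> B2. {x + y}) \<and> l \<in> lineality (minkowski_sum P Q)}" by blast
  qed
  ultimately show ?thesis unfolding bounded_mod_lineality_def by blast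
qed

lemma minkowski_sum_tangent_cone_subset:
  "minkowski_sum (tangent_cone X f) (tangent_cone Y g) \<subseteq> tangent_cone (minkowski_sum X Y) (f + g)"
proof
  fix y assume "y \<in> minkowski_sum (tangent_cone X f) (tangent_cone Y g)"
  then obtain x1 x2 e1 e2 where y: "y = (f + x1) + (g + x2)" and e: "e1 > 0" "e2 > 0"
    and h1: "\<And>\<epsilon>. 0 < \<epsilon> \<and> \<epsilon> < e1 \<longrightarrow> f + \<epsilon> *\<^sub>R x1 \<in> X"
    and h2: "\<And>\<epsilon>. 0 < \<epsilon> \<and> \<epsilon> < e2 \<longrightarrow> g + \<epsilon> *\<^sub>R x2 \<in> Y"
    unfolding minkowski_sum_def tangent_cone_def by blast
  have "f + g + \<epsilon> *\<^sub>R (x1 + x2) \<in> minkowski_sum X Y" if "0 < \<epsilon>" "\<epsilon> < min e1 e2" for \<epsilon>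
  proof -
    have "f + \<epsilon> *\<^sub>R x1 \<in> X" "g + \<epsilon> *\<^sub>R x2 \<in> Y" using h1 h2 that by auto
    moreover have "f + g + \<epsilon> *\<^sub>R (x1 + x2) = (f + \<epsilon> *\<^sub>R x1) + (g + \<epsilon> *\<^sub>R x2)"
      by (simp add: algebra_simps)
    ultimately show ?thesis unfolding minkowski_sum_def by blast
  qed
  moreover have "y = (f + g) + (x1 + x2)" using y by (simp add: algebra_simps)
  moreover have "min e1 e2 > 0" using e by simp
  ultimately show "y \<in> tangent_cone (minkowski_sum X Y) (f + g)"
    unfolding tangent_cone_def by blast
qed

context
  fixes S T :: "('e::finite) set"
  assumes disj: "S \<inter> T = {}"
begin

lemma coord_proj_add_left: "p \<in> RI S \<Longrightarrow> q \<in> RI T \<Longrightarrow> coord_proj S (p + q) = p"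
  using disj by (simp add: coord_proj_add coord_proj_id coord_proj_disjoint)

lemma coord_proj_add_right: "p \<in> RI S \<Longrightarrow> q \<in> RI T \<Longrightarrow> coord_proj T (p + q) = q"
  using disj by (simp add: coord_proj_add coord_proj_id coord_proj_disjoint[of T S] inf_commute)

lemma poly_prod_eq_minkowski_sum: "A \<subseteq> RI S \<Longrightarrow> B \<subseteq> RI T \<Longrightarrow> poly_prod S A B = minkowski_sum A B"
proof -
  assume A: "A \<subseteq> RI S" and B: "B \<subseteq> RI T"
  have "(\<chi> i. if i \<in> S then p $ i else q $ i) = p + q" if "p \<in> A" "q \<in> B" for p q
  proof -
    have "p \<in> RI S" "q \<in> RI T" using that A B by auto
    then show ?thesis using disj by (auto simp: vec_eq_iff RI_def disjoint_iff)
  qed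
  then show "poly_prod S A B = minkowski_sum A B" unfolding poly_prod_def minkowski_sum_def by (auto; metis)
qed

lemma minkowski_sum_subset_RI: "A \<subseteq> RI S \<Longrightarrow> B \<subseteq> RI T \<Longrightarrow> minkowski_sum A B \<subseteq> RI (S \<union> T)"
  unfolding minkowski_sum_def by (auto intro!: RI_add intro: RI_mono)

lemma coord_proj_minkowski_sum_left: "A \<subseteq> RI S \<Longrightarrow> B \<subseteq> RI T \<Longrightarrow> B \<noteq> {} \<Longrightarrow> coord_proj S ` minkowski_sum A B = A"
proof -
  assume A: "A \<subseteq> RI S" and B: "B \<subseteq> RI T" "B \<noteq> {}"
  then obtain b where b: "b \<in> B" by blast
  show "coord_proj S ` minkowski_sum A B = A"
  proof
    show "coord_proj S ` minkowski_sum A B \<subseteq> A" using A B by (auto simp: minkowski_sum_def coord_proj_add_left subset_iff)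
    show "A \<subseteq> coord_proj S ` minkowski_sum A B"
    proof
      fix a assume "a \<in> A"
      then have "a + b \<in> minkowski_sum A B" "coord_proj S (a + b) = a" using b A B by (auto simp: minkowski_sum_def coord_proj_add_left subset_iff)
      then show "a \<in> coord_proj S ` minkowski_sum A B" by (metis image_eqI)
    qed
  qed
qed

lemma coord_proj_minkowski_sum_right: "A \<subseteq> RI S \<Longrightarrow> B \<subseteq> RI T \<Longrightarrow> A \<noteq> {} \<Longrightarrow> coord_proj T ` minkowski_sum A B = B"
proof -
  assume A: "A \<subseteq> RI S" "A \<noteq> {}" and B: "B \<subseteq> RI T"
  then obtain a where a: "a \<in> A" by blast
  show "coord_proj T ` minkowski_sum A B = B"
  proof
    show "coord_proj T ` minkowski_sum A B \<subseteq> B" using A B by (auto simp: minkowski_sum_def coord_proj_add_right subset_iff)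
    show "B \<subseteq> coord_proj T ` minkowski_sum A B"
    proof
      fix b assume "b \<in> B"
      then have "a + b \<in> minkowski_sum A B" "coord_proj T (a + b) = b" using a A B by (auto simp: minkowski_sum_def coord_proj_add_right subset_iff)
      then show "b \<in> coord_proj T ` minkowski_sum A B" by (metis image_eqI)
    qed
  qed
qed

lemma minkowski_sum_inj:
  assumes "A \<subseteq> RI S" "B \<subseteq> RI T" "A' \<subseteq> RI S" "B' \<subseteq> RI T" "A \<noteq> {}" "B \<noteq> {}" "A' \<noteq> {}" "B' \<noteq> {}"
    and "minkowski_sum A B = minkowski_sum A' B'"
  shows "A = A' \<and> B = B'"
  using coord_proj_minkowski_sum_left[of A B] coord_proj_minkowski_sum_left[of A' B'] coord_proj_minkowski_sum_right[of A B] coord_proj_minkowski_sum_right[of A' B'] assms by metis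

definition coord_swap :: "'e pt \<times> 'e pt \<Rightarrow> 'e pt \<times> 'e pt" where
  "coord_swap = (\<lambda>(p, q). ((\<chi> i. if i \<in> S then p $ i else q $ i), (\<chi> i. if i \<in> S then q $ i else p $ i)))"

lemma linear_coord_swap: "linear coord_swap"
  by (rule linearI) (auto simp: coord_swap_def vec_eq_iff split: prod.splits)

lemma coord_swap_coord_swap: "coord_swap (coord_swap x) = x"
  by (cases x) (auto simp: coord_swap_def vec_eq_iff)

lemma inj_coord_swap: "inj coord_swap"
  by (metis coord_swap_coord_swap injI)

lemma coord_swap_Times: "A \<subseteq> RI S \<Longrightarrow> B \<subseteq> RI T \<Longrightarrow> coord_swap ` (A \<times> B) = minkowski_sum A B \<times> {0}"
proof -
  assume A: "A \<subseteq> RI S" and B: "B \<subseteq> RI T"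
  have LLpq: "coord_swap (p, q) = (p + q, 0)" if "p \<in> A" "q \<in> B" for p q
  proof -
    have "p \<in> RI S" "q \<in> RI T" using that A B by auto
    then show ?thesis using disj by (auto simp: coord_swap_def vec_eq_iff RI_def disjoint_iff)
  qed
  show ?thesis
  proof
    show "coord_swap ` (A \<times> B) \<subseteq> minkowski_sum A B \<times> {0}" using LLpq by (auto simp: minkowski_sum_def) blast
    show "minkowski_sum A B \<times> {0} \<subseteq> coord_swap ` (A \<times> B)"
    proof
      fix x assume "x \<in> minkowski_sum A B \<times> {0::'e pt}"
      then obtain p q where "p \<in> A" "q \<in> B" "x = (p + q, 0)" by (auto simp: minkowski_sum_def)
      then show "x \<in> coord_swap ` (A \<times> B)" using LLpq by (metis SigmaI image_eqI)
    qed
  qed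
qed

lemma face_of_minkowski_sum_iff:
  assumes A: "A \<subseteq> RI S" and B: "B \<subseteq> RI T"
  shows "H face_of minkowski_sum A B \<longleftrightarrow> (\<exists>F G. F face_of A \<and> G face_of B \<and> H = minkowski_sum F G)"
proof -
  have z: "{0::'e pt} face_of {0}" by (simp add: face_of_refl)
  have "H face_of minkowski_sum A B \<longleftrightarrow> (H \<times> {0::'e pt}) face_of (minkowski_sum A B \<times> {0})"
    using z by (auto simp: face_of_Times_eq face_of_Times)
  also have "\<dots> \<longleftrightarrow> (H \<times> {0}) face_of coord_swap ` (A \<times> B)" using coord_swap_Times[OF A B] by simp
  also have "\<dots> \<longleftrightarrow> (\<exists>F G. F face_of A \<and> G face_of B \<and> H = minkowski_sum F G)"
  proof
    assume h: "(H \<times> {0}) face_of coord_swap ` (A \<times> B)"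
    then have "H \<times> {0} \<in> {T. T face_of coord_swap ` (A \<times> B)}" by simp
    then obtain K where K: "K face_of A \<times> B" "H \<times> {0} = coord_swap ` K"
      using faces_of_linear_image[OF linear_coord_swap inj_coord_swap, of "A \<times> B"] by auto
    then obtain F G where FG: "F face_of A" "G face_of B" "K = F \<times> G"
      using face_of_Times_decomp by blast
    have "coord_swap ` K = minkowski_sum F G \<times> {0}"
      using FG coord_swap_Times[of F G] A B face_of_imp_subset by (metis subset_trans)
    then have "H \<times> {0::'e pt} = minkowski_sum F G \<times> {0}" using K by simp
    then have "H = minkowski_sum F G" by (metis fst_image_times insert_not_empty)
    then show "\<exists>F G. F face_of A \<and> G face_of B \<and> H = minkowski_sum F G" using FG by blast
  next
    assume "\<exists>F G. F face_of A \<and> G face_of B \<and> H = minkowski_sum F G"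
    then obtain F G where FG: "F face_of A" "G face_of B" "H = minkowski_sum F G" by blast
    have "F \<times> G face_of A \<times> B" using FG face_of_Times by blast
    then have "coord_swap ` (F \<times> G) face_of coord_swap ` (A \<times> B)" using face_of_linear_image[OF linear_coord_swap inj_coord_swap] by blast
    moreover have "coord_swap ` (F \<times> G) = H \<times> {0}"
      using FG coord_swap_Times[of F G] A B face_of_imp_subset by (metis subset_trans)
    ultimately show "(H \<times> {0}) face_of coord_swap ` (A \<times> B)" by simp
  qed
  finally show ?thesis .
qed

lemma rel_interior_minkowski_sum:
  assumes A: "A \<subseteq> RI S" and B: "B \<subseteq> RI T" and cA: "convex A" and cB: "convex B"
  shows "rel_interior (minkowski_sum A B) = minkowski_sum (rel_interior A) (rel_interior B)"
proof -
  have "rel_interior (minkowski_sum A B \<times> {0::'e pt}) = rel_interior (minkowski_sum A B) \<times> rel_interior {0::'e pt}"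
    by (rule rel_interior_Times[OF convex_minkowski_sum[OF cA cB] convex_singleton])
  then have "rel_interior (minkowski_sum A B) \<times> {0::'e pt} = rel_interior (minkowski_sum A B \<times> {0})" by simp
  also have "\<dots> = rel_interior (coord_swap ` (A \<times> B))" using coord_swap_Times[OF A B] by simp
  also have "\<dots> = coord_swap ` rel_interior (A \<times> B)"
    using rel_interior_injective_linear_image[of coord_swap] linear_coord_swap inj_coord_swap linear_conv_bounded_linear by blast
  also have "\<dots> = coord_swap ` (rel_interior A \<times> rel_interior B)" using rel_interior_Times[OF cA cB] by simp
  also have "\<dots> = minkowski_sum (rel_interior A) (rel_interior B) \<times> {0}"
    using coord_swap_Times A B rel_interior_subset by (metis subset_trans)
  finally show ?thesis by (metis fst_image_times insert_not_empty)
qed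

lemma coord_proj_split: "x \<in> RI (S \<union> T) \<Longrightarrow> x = coord_proj S x + coord_proj T x"
  using disj by (auto simp: coord_proj_def RI_def vec_eq_iff)

lemma aff_dim_minkowski_sum:
  assumes A: "A \<subseteq> RI S" "A \<noteq> {}" and B: "B \<subseteq> RI T" "B \<noteq> {}"
  shows "aff_dim (minkowski_sum A B) = aff_dim A + aff_dim B"
proof -
  have l1: "linear (\<lambda>x::'e pt. (x, 0::'e pt))" by (rule linearI) auto
  have i1: "inj (\<lambda>x::'e pt. (x, 0::'e pt))" by (rule injI) auto
  have "aff_dim (minkowski_sum A B) = aff_dim ((\<lambda>x. (x, 0::'e pt)) ` minkowski_sum A B)"
    using aff_dim_injective_linear_image[OF l1 i1] by simp
  also have "(\<lambda>x. (x, 0::'e pt)) ` minkowski_sum A B = minkowski_sum A B \<times> {0}" by auto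
  also have "\<dots> = coord_swap ` (A \<times> B)" using coord_swap_Times[OF A(1) B(1)] by simp
  also have "aff_dim \<dots> = aff_dim (A \<times> B)"
    using aff_dim_injective_linear_image[OF linear_coord_swap inj_coord_swap] by simp
  also have "\<dots> = aff_dim A + aff_dim B" using aff_dim_Times A B by blast
  finally show ?thesis .
qed

lemma dimension_minkowski_sum:
  assumes A: "A \<subseteq> RI S" "A \<noteq> {}" and B: "B \<subseteq> RI T" "B \<noteq> {}"
  shows "dimension (minkowski_sum A B) = dimension A + dimension B"
proof -
  have "aff_dim A \<ge> 0" "aff_dim B \<ge> 0"
    using A(2) B(2) aff_dim_negative_iff[of A] aff_dim_negative_iff[of B] by linarith+
  then show ?thesis using aff_dim_minkowski_sum[OF A B] by (simp add: dimension_def nat_add_distrib)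
qed

lemma coord_proj_left_lineality:
  assumes A: "A \<subseteq> RI S" and B: "B \<subseteq> RI T" "B \<noteq> {}" and d: "d \<in> lineality (minkowski_sum A B)"
  shows "coord_proj S d \<in> lineality A"
proof (unfold lineality_def, intro CollectI ballI allI)
  fix x t assume x: "x \<in> A"
  obtain y where y: "y \<in> B" using B by blast
  have "x + y \<in> minkowski_sum A B" using x y by (auto simp: minkowski_sum_def)
  then have "(x + y) + t *\<^sub>R d \<in> minkowski_sum A B" using d by (simp add: lineality_def)
  then obtain p q where pq: "p \<in> A" "q \<in> B" "(x + y) + t *\<^sub>R d = p + q" by (auto simp: minkowski_sum_def)
  have "coord_proj S ((x + y) + t *\<^sub>R d) = x + t *\<^sub>R coord_proj S d"
    using x y A B coord_proj_add_left by (simp add: coord_proj_add coord_proj_scaleR subset_iff)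
  moreover have "coord_proj S (p + q) = p" using pq A B coord_proj_add_left by (auto simp: subset_iff)
  ultimately show "x + t *\<^sub>R coord_proj S d \<in> A" using pq by simp
qed

lemma coord_proj_right_lineality:
  assumes A: "A \<subseteq> RI S" "A \<noteq> {}" and B: "B \<subseteq> RI T" and d: "d \<in> lineality (minkowski_sum A B)"
  shows "coord_proj T d \<in> lineality B"
proof (unfold lineality_def, intro CollectI ballI allI)
  fix y t assume y: "y \<in> B"
  obtain x where x: "x \<in> A" using A by blast
  have "x + y \<in> minkowski_sum A B" using x y by (auto simp: minkowski_sum_def)
  then have "(x + y) + t *\<^sub>R d \<in> minkowski_sum A B" using d by (simp add: lineality_def)
  then obtain p q where pq: "p \<in> A" "q \<in> B" "(x + y) + t *\<^sub>R d = p + q" by (auto simp: minkowski_sum_def)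
  have "coord_proj T ((x + y) + t *\<^sub>R d) = y + t *\<^sub>R coord_proj T d"
    using x y A B coord_proj_add_right by (simp add: coord_proj_add coord_proj_scaleR subset_iff)
  moreover have "coord_proj T (p + q) = q" using pq A B coord_proj_add_right by (auto simp: subset_iff)
  ultimately show "y + t *\<^sub>R coord_proj T d \<in> B" using pq by simp
qed

lemma bounded_mod_lineality_minkowski_sumD:
  assumes P: "P \<subseteq> RI S" and Q: "Q \<subseteq> RI T" and F: "F \<subseteq> P" "F \<noteq> {}" and G: "G \<subseteq> Q" "G \<noteq> {}"
    and FG: "bounded_mod_lineality (minkowski_sum P Q) (minkowski_sum F G)"
  shows "bounded_mod_lineality P F \<and> bounded_mod_lineality Q G"
proof -
  obtain B where B: "bounded B"
    "minkowski_sum F G \<subseteq> {b + l | b l. b \<in> B \<and> l \<in> lineality (minkowski_sum P Q)}"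
    using FG by (auto simp: bounded_mod_lineality_def)
  obtain f0 g0 where f0: "f0 \<in> F" and g0: "g0 \<in> G" using F G by blast
  have "F \<subseteq> {b + l | b l. b \<in> coord_proj S ` B \<and> l \<in> lineality P}"
  proof
    fix f assume f: "f \<in> F"
    then have "f + g0 \<in> minkowski_sum F G" using g0 by (auto simp: minkowski_sum_def)
    then obtain b l where bl: "b \<in> B" "l \<in> lineality (minkowski_sum P Q)" "f + g0 = b + l" using B by blast
    have "coord_proj S (f + g0) = f" using f g0 F G P Q coord_proj_add_left by (auto simp: subset_iff)
    then have "f = coord_proj S b + coord_proj S l" using bl by (simp add: coord_proj_add)
    moreover have "coord_proj S l \<in> lineality P" using coord_proj_left_lineality[OF P Q] bl G F by blast
    ultimately show "f \<in> {b + l | b l. b \<in> coord_proj S ` B \<and> l \<in> lineality P}" using bl by blast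
  qed
  moreover have "G \<subseteq> {b + l | b l. b \<in> coord_proj T ` B \<and> l \<in> lineality Q}"
  proof
    fix g assume g: "g \<in> G"
    then have "f0 + g \<in> minkowski_sum F G" using f0 by (auto simp: minkowski_sum_def)
    then obtain b l where bl: "b \<in> B" "l \<in> lineality (minkowski_sum P Q)" "f0 + g = b + l" using B by blast
    have "coord_proj T (f0 + g) = g" using f0 g F G P Q coord_proj_add_right by (auto simp: subset_iff)
    then have "g = coord_proj T b + coord_proj T l" using bl by (simp add: coord_proj_add)
    moreover have "coord_proj T l \<in> lineality Q" using coord_proj_right_lineality[OF P _ Q] bl G F by blast
    ultimately show "g \<in> {b + l | b l. b \<in> coord_proj T ` B \<and> l \<in> lineality Q}" using bl by blast
  qed
  moreover have "bounded (coord_proj S ` B)" "bounded (coord_proj T ` B)"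
    using B(1) bounded_linear_image bounded_linear_coord_proj by blast+
  ultimately show ?thesis unfolding bounded_mod_lineality_def by blast
qed

lemma tangent_cone_minkowski_sum_subset:
  assumes X: "X \<subseteq> RI S" and Y: "Y \<subseteq> RI T" and f: "f \<in> X" and g: "g \<in> Y"
  shows "tangent_cone (minkowski_sum X Y) (f + g) \<subseteq> minkowski_sum (tangent_cone X f) (tangent_cone Y g)"
proof
  fix y assume "y \<in> tangent_cone (minkowski_sum X Y) (f + g)"
  then obtain x e where y: "y = f + g + x" and e: "e > 0"
    and h: "\<And>\<epsilon>. 0 < \<epsilon> \<Longrightarrow> \<epsilon> < e \<Longrightarrow> f + g + \<epsilon> *\<^sub>R x \<in> minkowski_sum X Y"
    unfolding tangent_cone_def by blast
  have fR: "f \<in> RI S" and gR: "g \<in> RI T" using f g X Y by auto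
  have fgR: "f + g \<in> RI (S \<union> T)" using fR gR by (intro RI_add) (auto intro: RI_mono)
  have "f + g + (e/2) *\<^sub>R x \<in> RI (S \<union> T)" using h[of "e/2"] e minkowski_sum_subset_RI[OF X Y] by auto
  then have xR: "x \<in> RI (S \<union> T)" using RI_cancel_scaleR[OF fgR] e by simp
  have decomp: "f + \<epsilon> *\<^sub>R coord_proj S x \<in> X \<and> g + \<epsilon> *\<^sub>R coord_proj T x \<in> Y" if eps: "0 < \<epsilon>" "\<epsilon> < e" for \<epsilon>
  proof -
    obtain p q where pq: "p \<in> X" "q \<in> Y" "f + g + \<epsilon> *\<^sub>R x = p + q"
      using h[OF eps] by (auto simp: minkowski_sum_def)
    have pR: "p \<in> RI S" and qR: "q \<in> RI T" using pq X Y by auto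
    have "coord_proj S (f + g + \<epsilon> *\<^sub>R x) = f + \<epsilon> *\<^sub>R coord_proj S x"
      using coord_proj_add_left[OF fR gR] by (simp add: coord_proj_add coord_proj_scaleR)
    moreover have "coord_proj S (p + q) = p" using coord_proj_add_left[OF pR qR] .
    moreover have "coord_proj T (f + g + \<epsilon> *\<^sub>R x) = g + \<epsilon> *\<^sub>R coord_proj T x"
      using coord_proj_add_right[OF fR gR] by (simp add: coord_proj_add coord_proj_scaleR)
    moreover have "coord_proj T (p + q) = q" using coord_proj_add_right[OF pR qR] .
    ultimately show ?thesis using pq by metis
  qed
  have "f + coord_proj S x \<in> tangent_cone X f"
    unfolding tangent_cone_def using e decomp by blast
  moreover have "g + coord_proj T x \<in> tangent_cone Y g"
    unfolding tangent_cone_def using e decomp by blast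
  moreover have "y = (f + coord_proj S x) + (g + coord_proj T x)"
    using y coord_proj_split[OF xR] by (simp add: algebra_simps)
  ultimately show "y \<in> minkowski_sum (tangent_cone X f) (tangent_cone Y g)" unfolding minkowski_sum_def by blast
qed

lemma tangent_cone_minkowski_sum:
  assumes X: "X \<subseteq> RI S" and Y: "Y \<subseteq> RI T" and f: "f \<in> X" and g: "g \<in> Y"
  shows "tangent_cone (minkowski_sum X Y) (f + g) = minkowski_sum (tangent_cone X f) (tangent_cone Y g)"
  using tangent_cone_minkowski_sum_subset[OF assms] minkowski_sum_tangent_cone_subset by blast

lemma face_cone_minkowski_sum:
  assumes P: "P \<in> GP S" and Q: "Q \<in> GP T" and F: "F face_of P" "F \<noteq> {}" and G: "G face_of Q" "G \<noteq> {}"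
  shows "face_cone (minkowski_sum P Q) (minkowski_sum F G) = minkowski_sum (face_cone P F) (face_cone Q G)"
proof -
  have FP: "F \<subseteq> P" and GQ: "G \<subseteq> Q" using F G face_of_imp_subset by auto
  have FR: "F \<subseteq> RI S" and GR: "G \<subseteq> RI T" using FP GQ GP_subset_RI P Q by blast+
  have cF: "convex F" "convex G" using F G face_of_imp_convex by auto
  define h where "h = (SOME h. h \<in> rel_interior (minkowski_sum F G))"
  have "minkowski_sum F G face_of minkowski_sum P Q" using face_of_minkowski_sum_iff[OF GP_subset_RI[OF P] GP_subset_RI[OF Q]] F G by blast
  moreover have "minkowski_sum F G \<noteq> {}" using F G by (auto simp: minkowski_sum_def)
  ultimately have "h \<in> rel_interior (minkowski_sum F G)" unfolding h_def by (rule some_rel_interior)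
  then obtain f g where fg: "f \<in> rel_interior F" "g \<in> rel_interior G" "h = f + g"
    using rel_interior_minkowski_sum[OF FR GR cF] by (auto simp: minkowski_sum_def)
  have fP: "f \<in> P" and gQ: "g \<in> Q" using fg FP GQ rel_interior_subset by blast+
  have "face_cone (minkowski_sum P Q) (minkowski_sum F G) = tangent_cone (minkowski_sum P Q) (f + g)"
    unfolding face_cone_def h_def[symmetric] fg(3) ..
  also have "\<dots> = minkowski_sum (tangent_cone P f) (tangent_cone Q g)"
    by (rule tangent_cone_minkowski_sum[OF GP_subset_RI[OF P] GP_subset_RI[OF Q] fP gQ])
  also have "tangent_cone P f = face_cone P F"
    using face_cone_GP[OF P F fg(1)] by simp
  also have "tangent_cone Q g = face_cone Q G"
    using face_cone_GP[OF Q G fg(2)] by simp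
  finally show ?thesis .
qed

lemma rb_faces_minkowski_sum:
  assumes P: "P \<in> GP S" and Q: "Q \<in> GP T"
  shows "rb_faces (minkowski_sum P Q) = (\<lambda>(F, G). minkowski_sum F G) ` (rb_faces P \<times> rb_faces Q)"
proof -
  have PR: "P \<subseteq> RI S" and QR: "Q \<subseteq> RI T" using P Q GP_subset_RI by auto
  have rb: "rel_bounded_face (minkowski_sum P Q) (minkowski_sum F G) \<longleftrightarrow> rel_bounded_face P F \<and> rel_bounded_face Q G"
    if F: "F face_of P" "F \<noteq> {}" and G: "G face_of Q" "G \<noteq> {}" for F G
  proof -
    have "minkowski_sum F G face_of minkowski_sum P Q" using face_of_minkowski_sum_iff[OF PR QR] F G by blast
    then show ?thesis unfolding rel_bounded_face_eq
      using bounded_mod_lineality_minkowski_sumD[OF PR QR face_of_imp_subset[OF F(1)] F(2) face_of_imp_subset[OF G(1)] G(2)]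
        bounded_mod_lineality_minkowski_sum F G by blast
  qed
  show ?thesis
  proof
    show "rb_faces (minkowski_sum P Q) \<subseteq> (\<lambda>(F, G). minkowski_sum F G) ` (rb_faces P \<times> rb_faces Q)"
    proof
      fix H assume H: "H \<in> rb_faces (minkowski_sum P Q)"
      then obtain F G where FG: "F face_of P" "G face_of Q" "H = minkowski_sum F G"
        using face_of_minkowski_sum_iff[OF PR QR] by (auto simp: rb_faces_def)
      have ne: "F \<noteq> {}" "G \<noteq> {}" using H FG by (auto simp: rb_faces_def minkowski_sum_def)
      then have "rel_bounded_face P F \<and> rel_bounded_face Q G" using rb[OF FG(1) ne(1) FG(2) ne(2)] H FG by (simp add: rb_faces_def)
      then show "H \<in> (\<lambda>(F, G). minkowski_sum F G) ` (rb_faces P \<times> rb_faces Q)" using FG ne by (auto simp: rb_faces_def)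
    qed
    show "(\<lambda>(F, G). minkowski_sum F G) ` (rb_faces P \<times> rb_faces Q) \<subseteq> rb_faces (minkowski_sum P Q)"
    proof
      fix H assume "H \<in> (\<lambda>(F, G). minkowski_sum F G) ` (rb_faces P \<times> rb_faces Q)"
      then obtain F G where FG: "F \<in> rb_faces P" "G \<in> rb_faces Q" "H = minkowski_sum F G" by auto
      then have "F face_of P" "F \<noteq> {}" "G face_of Q" "G \<noteq> {}" by (auto simp: rb_faces_def)
      moreover have "H \<noteq> {}" using FG by (auto simp: rb_faces_def minkowski_sum_def)
      ultimately show "H \<in> rb_faces (minkowski_sum P Q)" using FG rb face_of_minkowski_sum_iff[OF PR QR] by (auto simp: rb_faces_def)
    qed
  qed
qed

lemma inj_on_minkowski_sum_rb_faces:
  assumes P: "P \<in> GP S" and Q: "Q \<in> GP T"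
  shows "inj_on (\<lambda>(F, G). minkowski_sum F G) (rb_faces P \<times> rb_faces Q)"
proof (rule inj_onI, clarify)
  fix F G F' G' assume a: "F \<in> rb_faces P" "G \<in> rb_faces Q" "F' \<in> rb_faces P" "G' \<in> rb_faces Q" "minkowski_sum F G = minkowski_sum F' G'"
  have PR: "P \<subseteq> RI S" "Q \<subseteq> RI T" using P Q GP_subset_RI by auto
  have "F \<subseteq> P" "F' \<subseteq> P" "G \<subseteq> Q" "G' \<subseteq> Q" "F \<noteq> {}" "F' \<noteq> {}" "G \<noteq> {}" "G' \<noteq> {}"
    using a face_of_imp_subset unfolding rb_faces_def by auto
  then have "F \<subseteq> RI S" "F' \<subseteq> RI S" "G \<subseteq> RI T" "G' \<subseteq> RI T" "F \<noteq> {}" "F' \<noteq> {}" "G \<noteq> {}" "G' \<noteq> {}"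
    using PR by auto
  then show "F = F' \<and> G = G'" using minkowski_sum_inj a(5) by blast
qed

lemma sum_rb_faces_minkowski_sum:
  fixes w :: "'e poly \<Rightarrow> 'k::comm_ring_1"
  assumes P: "P \<in> GP S" and Q: "Q \<in> GP T"
  shows "(\<Sum>H\<in>rb_faces (minkowski_sum P Q). (-1) ^ dimension H * w (face_cone (minkowski_sum P Q) H))
    = (\<Sum>F\<in>rb_faces P. \<Sum>G\<in>rb_faces Q. (-1) ^ dimension F * (-1) ^ dimension G *
        w (minkowski_sum (face_cone P F) (face_cone Q G)))"
proof -
  have "(\<Sum>H\<in>rb_faces (minkowski_sum P Q). (-1) ^ dimension H * w (face_cone (minkowski_sum P Q) H))
    = (\<Sum>(F, G)\<in>rb_faces P \<times> rb_faces Q. (-1) ^ dimension (minkowski_sum F G) *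
        w (face_cone (minkowski_sum P Q) (minkowski_sum F G)))"
    unfolding rb_faces_minkowski_sum[OF P Q]
    by (subst sum.reindex[OF inj_on_minkowski_sum_rb_faces[OF P Q]]) (simp add: case_prod_unfold)
  also have "\<dots> = (\<Sum>(F, G)\<in>rb_faces P \<times> rb_faces Q. (-1) ^ dimension F * (-1) ^ dimension G *
      w (minkowski_sum (face_cone P F) (face_cone Q G)))"
  proof (intro sum.cong refl, clarify)
    fix F G assume "F \<in> rb_faces P" "G \<in> rb_faces Q"
    then have F: "F face_of P" "F \<noteq> {}" and G: "G face_of Q" "G \<noteq> {}" by (auto simp: rb_faces_def)
    have "F \<subseteq> RI S" "G \<subseteq> RI T"
      using F G face_of_imp_subset GP_subset_RI[OF P] GP_subset_RI[OF Q] by blast+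
    then have "dimension (minkowski_sum F G) = dimension F + dimension G"
      using dimension_minkowski_sum F(2) G(2) by blast
    then show "(-1) ^ dimension (minkowski_sum F G) * w (face_cone (minkowski_sum P Q) (minkowski_sum F G))
      = (-1) ^ dimension F * (-1) ^ dimension G * w (minkowski_sum (face_cone P F) (face_cone Q G))"
      by (simp add: face_cone_minkowski_sum[OF P Q F G] power_add)
  qed
  finally show ?thesis by (simp add: sum.cartesian_product)
qed

lemma mult_bg_basis:
  assumes P: "P \<in> GP S" and Q: "Q \<in> GP T"
  shows "mult S (bg_basis P) (bg_basis Q) = (bg_basis (minkowski_sum P Q) :: _ \<Rightarrow> 'k::comm_ring_1)"
proof
  fix R
  have fP: "finite (rb_faces P)" and fQ: "finite (rb_faces Q)" using finite_rb_faces P Q by auto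
  have fPQ: "finite (rb_faces (minkowski_sum P Q))" using rb_faces_minkowski_sum[OF P Q] fP fQ by simp
  have cones: "poly_prod S (face_cone P F) (face_cone Q G) = minkowski_sum (face_cone P F) (face_cone Q G)"
    if "F \<in> rb_faces P" "G \<in> rb_faces Q" for F G
  proof -
    have "face_cone P F \<in> GP S" "face_cone Q G \<in> GP T"
      using that face_cone_in_GP P Q by (auto simp: rb_faces_def)
    then show ?thesis by (intro poly_prod_eq_minkowski_sum GP_subset_RI)
  qed
  have "mult S (bg_basis P) (bg_basis Q) R = lin_ext (\<lambda>F. lin_ext (\<lambda>G. mult S
      (basis_vec (face_cone P F)) (basis_vec (face_cone Q G))) (face_sign Q)) (face_sign P) R"
    unfolding bg_basis_eq_lin_ext[OF fP] bg_basis_eq_lin_ext[OF fQ]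
    by (subst mult_lin_ext) (auto simp: finite_supp_face_sign fP fQ finite_supp_basis_vec)
  also have "\<dots> = (\<Sum>F\<in>rb_faces P. \<Sum>G\<in>rb_faces Q. (-1) ^ dimension F * (-1) ^ dimension G *
      basis_vec (minkowski_sum (face_cone P F) (face_cone Q G)) R)"
    by (simp add: lin_ext_face_sign fP fQ mult_basis_vec cones sum_distrib_left mult.assoc)
  also have "\<dots> = (\<Sum>H\<in>rb_faces (minkowski_sum P Q).
      (-1) ^ dimension H * basis_vec (face_cone (minkowski_sum P Q) H) R)"
    by (rule sum_rb_faces_minkowski_sum[OF P Q, symmetric])
  also have "\<dots> = bg_basis (minkowski_sum P Q) R"
    by (simp add: bg_basis_eq_lin_ext[OF fPQ] lin_ext_face_sign[OF fPQ])
  finally show "mult S (bg_basis P) (bg_basis Q) R = bg_basis (minkowski_sum P Q) R" .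
qed

end

lemma bg_mult:
  fixes a b :: "('e::finite) poly \<Rightarrow> 'k::comm_ring_1"
  assumes disj: "S \<inter> T = {}" and a: "a \<in> span_of (GP S)" and b: "b \<in> span_of (GP T)"
  shows "bg (mult S a b) = mult S (bg a) (bg b)"
proof -
  have fa: "finite (supp a)" "supp a \<subseteq> GP S" and fb: "finite (supp b)" "supp b \<subseteq> GP T"
    using a b by (auto simp: span_of_def)
  have "bg (mult S a b) = lin_ext (\<lambda>P. lin_ext (\<lambda>Q. bg_basis (poly_prod S P Q)) b) a"
    unfolding bg_def by (rule lin_ext_mult[OF fa(1) fb(1)])
  also have "\<dots> = lin_ext (\<lambda>P. lin_ext (\<lambda>Q. mult S (bg_basis P) (bg_basis Q)) b) a"
  proof (intro lin_ext_cong)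
    fix P Q assume "P \<in> supp a" "Q \<in> supp b"
    then have "P \<in> GP S" "Q \<in> GP T" using fa fb by auto
    then show "bg_basis (poly_prod S P Q) = mult S (bg_basis P) (bg_basis Q)"
      by (simp add: mult_bg_basis[OF disj] poly_prod_eq_minkowski_sum[OF disj] GP_subset_RI)
  qed
  also have "\<dots> = mult S (bg a) (bg b)"
    unfolding bg_def using fa fb finite_supp_bg_basis by (intro mult_lin_ext[symmetric]) auto
  finally show ?thesis .
qed

section \<open>Coproducts\<close>

lemma max_face_eq: "max_face S P = {x \<in> P. \<forall>y\<in>P. coord_sum S y \<le> coord_sum S x}"
  by (simp add: max_face_def coord_sum_def)

lemma coord_sum_coord_proj: "coord_sum A (coord_proj S x) = coord_sum (A \<inter> S) x"
proof -
  have "coord_sum A (coord_proj S x) = coord_sum (A \<inter> S) (coord_proj S x)"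
    using coord_proj_RI by (rule coord_sum_RI)
  also have "\<dots> = coord_sum (A \<inter> S) x" unfolding coord_sum_def coord_proj_def by (intro sum.cong) auto
  finally show ?thesis .
qed

lemma exchange_step:
  fixes x :: "('e::finite) pt"
  assumes sm: "ext_submodular I z" and x: "x \<in> gp_of I z" and ij: "i \<in> I" "j \<in> I" "i \<noteq> j"
    and nt: "\<not> (\<exists>A. tight I z x A \<and> i \<in> A \<and> j \<notin> A)"
  shows "\<exists>d>0. x + d *\<^sub>R (axis i 1 - axis j 1) \<in> gp_of I z"
proof -
  obtain d where d: "d > 0"
    and gap: "\<And>A. A \<subseteq> I \<Longrightarrow> \<not> tight I z x A \<Longrightarrow> z A \<noteq> \<infinity> \<Longrightarrow> coord_sum A x + d \<le> real_of_ereal (z A)"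
    using uniform_slack[OF x sm] by blast
  define v :: "'e pt" where "v = axis i 1 - axis j 1"
  have sv: "coord_sum A v = (if i \<in> A then 1 else 0) - (if j \<in> A then 1 else 0)" for A
    by (simp add: v_def coord_sum_diff coord_sum_axis)
  have "x + d *\<^sub>R v \<in> gp_of I z"
  proof -
    have "v \<in> RI I" using ij by (auto simp: v_def RI_def axis_def)
    then have "x + d *\<^sub>R v \<in> RI I" using gp_ofD(1)[OF x] by (simp add: RI_add RI_scaleR)
    moreover have "coord_sum I (x + d *\<^sub>R v) = coord_sum I x" using ij by (simp add: coord_sum_add coord_sum_scaleR sv)
    then have "ereal (coord_sum I (x + d *\<^sub>R v)) = z I" using gp_ofD(2)[OF x] by simp
    moreover have "ereal (coord_sum A (x + d *\<^sub>R v)) \<le> z A" if A: "A \<subseteq> I" for A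
    proof (cases "i \<in> A \<and> j \<notin> A")
      case True
      then have nA: "\<not> tight I z x A" using nt by blast
      show ?thesis
      proof (cases "z A = \<infinity>")
        case False
        have "coord_sum A x + d \<le> real_of_ereal (z A)" using gap[OF A nA False] .
        moreover have "z A \<noteq> -\<infinity>" using ext_submodularD(1)[OF sm A] .
        moreover have "coord_sum A (x + d *\<^sub>R v) = coord_sum A x + d" using True by (simp add: coord_sum_add coord_sum_scaleR sv)
        ultimately show ?thesis using False by (cases "z A") auto
      qed simp
    next
      case False
      then have "coord_sum A v \<le> 0" by (auto simp: sv)
      then have "coord_sum A (x + d *\<^sub>R v) \<le> coord_sum A x" using d by (simp add: coord_sum_add coord_sum_scaleR mult_nonneg_nonpos)
      moreover have "ereal (coord_sum A x) \<le> z A" using gp_ofD(3)[OF x A] .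
      ultimately show ?thesis by (meson ereal_less_eq(3) order_trans)
    qed
    ultimately show ?thesis by (simp add: gp_of_eq)
  qed
  then show ?thesis using d by (auto simp: v_def)
qed

definition contraction :: "'e set \<Rightarrow> ('e set \<Rightarrow> ereal) \<Rightarrow> 'e set \<Rightarrow> ereal" where
  "contraction S z B = z (B \<union> S) - z S"

lemma ext_submodular_restriction:
  assumes sm: "ext_submodular I z" and S: "S \<subseteq> I" and zS: "z S \<noteq> \<infinity>"
  shows "ext_submodular S z"
  unfolding ext_submodular_def
proof (intro conjI allI impI zS)
  show "z A \<noteq> -\<infinity>" if "A \<subseteq> S" for A using that S ext_submodularD(1)[OF sm] by blast
  show "z {} = 0" using ext_submodularD(3)[OF sm] .
  show "z (A \<union> B) + z (A \<inter> B) \<le> z A + z B"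
    if "A \<subseteq> S" "B \<subseteq> S" "z A \<noteq> \<infinity>" "z B \<noteq> \<infinity>" for A B
    using that S ext_submodularD(4)[OF sm] by blast
qed

lemma ext_submodular_contraction:
  assumes sm: "ext_submodular (S \<union> T) z" and zS: "z S \<noteq> \<infinity>"
  shows "ext_submodular T (contraction S z)"
proof -
  obtain s where s: "z S = ereal s" using zS ext_submodularD(1)[OF sm, of S] by (cases "z S") auto
  have shift: "contraction S z B = z (B \<union> S) - ereal s" for B by (simp add: contraction_def s)
  have finite_below: "z (B \<union> S) \<noteq> -\<infinity>" if "B \<subseteq> T" for B using that ext_submodularD(1)[OF sm] by blast
  show ?thesis unfolding ext_submodular_def shift
  proof (intro conjI allI impI)
    show "z (B \<union> S) - ereal s \<noteq> -\<infinity>" if "B \<subseteq> T" for B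
      using finite_below[OF that] by (cases "z (B \<union> S)") auto
    show "z (T \<union> S) - ereal s \<noteq> \<infinity>"
      using ext_submodularD(2)[OF sm] by (cases "z (T \<union> S)") (auto simp: Un_commute)
    show "z ({} \<union> S) - ereal s = 0" using s by simp
    fix B C assume BC: "B \<subseteq> T" "C \<subseteq> T" "z (B \<union> S) - ereal s \<noteq> \<infinity>" "z (C \<union> S) - ereal s \<noteq> \<infinity>"
    have "(B \<union> S) \<union> (C \<union> S) = (B \<union> C) \<union> S" "(B \<union> S) \<inter> (C \<union> S) = (B \<inter> C) \<union> S" by blast+
    moreover have "z (B \<union> S) \<noteq> \<infinity>" "z (C \<union> S) \<noteq> \<infinity>" using BC(3,4) by auto
    ultimately have "z ((B \<union> C) \<union> S) + z ((B \<inter> C) \<union> S) \<le> z (B \<union> S) + z (C \<union> S)"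
      using ext_submodularD(4)[OF sm, of "B \<union> S" "C \<union> S"] BC(1,2) by auto
    moreover have "B \<union> C \<subseteq> T" "B \<inter> C \<subseteq> T" using BC(1,2) by auto
    ultimately show "z (B \<union> C \<union> S) - ereal s + (z (B \<inter> C \<union> S) - ereal s)
        \<le> z (B \<union> S) - ereal s + (z (C \<union> S) - ereal s)"
      using finite_below BC(1,2)
      by (cases "z ((B \<union> C) \<union> S)"; cases "z ((B \<inter> C) \<union> S)"; cases "z (B \<union> S)"; cases "z (C \<union> S)") auto
  qed
qed

context
  fixes S T :: "('e::finite) set"
  assumes disj: "S \<inter> T = {}"
begin

lemma tight_separating_set:
  assumes sm: "ext_submodular (S \<union> T) z" and x: "x \<in> max_face S (gp_of (S \<union> T) z)"
    and ij: "i \<in> S" "j \<in> T"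
  shows "\<exists>A. tight (S \<union> T) z x A \<and> i \<in> A \<and> j \<notin> A"
proof (rule ccontr)
  assume nt: "\<not> (\<exists>A. tight (S \<union> T) z x A \<and> i \<in> A \<and> j \<notin> A)"
  have xP: "x \<in> gp_of (S \<union> T) z" using x by (simp add: max_face_eq)
  have "i \<noteq> j" using ij disj by blast
  then obtain d where d: "d > 0" "x + d *\<^sub>R (axis i 1 - axis j 1) \<in> gp_of (S \<union> T) z"
    using exchange_step[OF sm xP _ _ _ nt] ij by blast
  have "coord_sum S (x + d *\<^sub>R (axis i 1 - axis j 1)) = coord_sum S x + d"
    using ij disj by (auto simp: coord_sum_add coord_sum_scaleR coord_sum_diff coord_sum_axis)
  then show False using x d by (auto simp: max_face_eq)
qed

text \<open>Separating tight sets for all pairs in S \<times> T combine, by the lattice property, into S itself.\<close>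

lemma tight_max_face:
  assumes sm: "ext_submodular (S \<union> T) z" and x: "x \<in> max_face S (gp_of (S \<union> T) z)"
  shows "tight (S \<union> T) z x S"
proof -
  let ?t = "tight (S \<union> T) z x"
  have xP: "x \<in> gp_of (S \<union> T) z" using x by (simp add: max_face_eq)
  show ?thesis
  proof (cases "S = {} \<or> T = {}")
    case True
    then show ?thesis using tight_empty[OF sm] tight_ground_set[OF xP] by auto
  next
    case False
    define A where "A = (\<lambda>i j. SOME A. ?t A \<and> i \<in> A \<and> j \<notin> A)"
    have A: "?t (A i j) \<and> i \<in> A i j \<and> j \<notin> A i j" if "i \<in> S" "j \<in> T" for i j
      unfolding A_def using someI_ex[OF tight_separating_set[OF sm x that]] .
    define C where "C = (\<lambda>i. \<Inter>((A i) ` T))"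
    have C: "?t (C i) \<and> i \<in> C i \<and> C i \<inter> T = {}" if "i \<in> S" for i
      using tight_Inter_Union[OF sm xP, of "(A i) ` T"] False A[OF that] by (auto simp: C_def)
    have "?t (\<Union>(C ` S))" using tight_Inter_Union[OF sm xP, of "C ` S"] False C by auto
    moreover have "\<Union>(C ` S) = S"
      using C calculation by (auto simp: tight_def)
    ultimately show ?thesis by simp
  qed
qed

lemma coord_proj_mem_gp_of:
  assumes x: "x \<in> gp_of (S \<union> T) z" and s: "z S = ereal (coord_sum S x)"
  shows "coord_proj S x \<in> gp_of S z" "coord_proj T x \<in> gp_of T (contraction S z)"
proof -
  have "ereal (coord_sum A (coord_proj S x)) \<le> z A" if "A \<subseteq> S" for A
  proof -
    have "A \<subseteq> S \<union> T" using that by blast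
    from gp_ofD(3)[OF x this] that show ?thesis by (simp add: coord_sum_coord_proj Int_absorb2)
  qed
  then show "coord_proj S x \<in> gp_of S z" using s coord_proj_RI by (simp add: gp_of_eq coord_sum_coord_proj)
  have sum: "coord_sum (B \<union> S) x = coord_sum B (coord_proj T x) + coord_sum S x" if "B \<subseteq> T" for B
  proof -
    have "B \<inter> S = {}" using that disj by blast
    then show ?thesis using that by (simp add: coord_sum_disjoint_Un coord_sum_coord_proj Int_absorb2)
  qed
  have "ereal (coord_sum B (coord_proj T x)) \<le> contraction S z B" if B: "B \<subseteq> T" for B
  proof -
    have "B \<union> S \<subseteq> S \<union> T" using B by blast
    from gp_ofD(3)[OF x this] sum[OF B] s show ?thesis
      by (cases "z (B \<union> S)") (auto simp: contraction_def)
  qed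
  moreover have "z (S \<union> T) = ereal (coord_sum T (coord_proj T x) + coord_sum S x)"
    using gp_ofD(2)[OF x] sum[of T] by (metis Un_commute order_refl)
  then have "ereal (coord_sum T (coord_proj T x)) = contraction S z T"
    using s by (simp add: contraction_def Un_commute)
  ultimately show "coord_proj T x \<in> gp_of T (contraction S z)" using coord_proj_RI by (simp add: gp_of_eq)
qed

lemma add_mem_gp_of:
  assumes sm: "ext_submodular (S \<union> T) z" and s: "z S = ereal s"
    and u: "u \<in> gp_of S z" and v: "v \<in> gp_of T (contraction S z)"
  shows "u + v \<in> gp_of (S \<union> T) z" "coord_sum S (u + v) = s"
proof -
  have uR: "u \<in> RI S" and vR: "v \<in> RI T" using gp_ofD(1) u v by auto
  have split: "coord_sum A (u + v) = coord_sum (A \<inter> S) u + coord_sum (A \<inter> T) v" for A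
    using coord_sum_RI[OF uR] coord_sum_RI[OF vR] by (simp add: coord_sum_add)
  have uS: "coord_sum S u = s" using gp_ofD(2)[OF u] s by simp
  then show "coord_sum S (u + v) = s" using split[of S] disj by (simp add: coord_sum_def)
  have bound: "ereal (coord_sum A (u + v)) \<le> z A" if A: "A \<subseteq> S \<union> T" for A
  proof (cases "z A = \<infinity>")
    case False
    have le: "z (A \<union> S) + z (A \<inter> S) \<le> z A + z S"
      using ext_submodularD(4)[OF sm A _ False, of S] s by simp
    have "ereal (coord_sum (A \<inter> S) u) \<le> z (A \<inter> S)" using gp_ofD(3)[OF u] by blast
    moreover have "ereal (coord_sum (A \<inter> T) v) \<le> z (A \<union> S) - z S"
    proof -
      have "A \<inter> T \<union> S = A \<union> S" using A by blast
      then show ?thesis using gp_ofD(3)[OF v, of "A \<inter> T"] by (simp add: contraction_def)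
    qed
    moreover have "z (A \<union> S) \<noteq> -\<infinity>" "z (A \<inter> S) \<noteq> -\<infinity>" "z A \<noteq> -\<infinity>"
      using ext_submodularD(1)[OF sm] A by auto
    ultimately show ?thesis using le s False split[of A]
      by (cases "z (A \<union> S)"; cases "z (A \<inter> S)"; cases "z A") auto
  qed simp
  have "ereal (coord_sum T v) = z (S \<union> T) - ereal s"
    using gp_ofD(2)[OF v] s by (simp add: contraction_def Un_commute)
  moreover have "z (S \<union> T) \<noteq> \<infinity>" "z (S \<union> T) \<noteq> -\<infinity>" using ext_submodularD(1,2)[OF sm] by auto
  ultimately have "ereal (coord_sum (S \<union> T) (u + v)) = z (S \<union> T)"
    using split[of "S \<union> T"] uS disj by (cases "z (S \<union> T)") (auto simp: Int_absorb2 Int_commute)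
  moreover have "u + v \<in> RI (S \<union> T)" using uR vR by (auto intro!: RI_add intro: RI_mono)
  ultimately show "u + v \<in> gp_of (S \<union> T) z" using bound by (simp add: gp_of_eq)
qed

lemma max_face_gp_of:
  assumes sm: "ext_submodular (S \<union> T) z" and G: "max_face S (gp_of (S \<union> T) z) \<noteq> {}"
  shows "z S \<noteq> \<infinity>"
    "max_face S (gp_of (S \<union> T) z) = minkowski_sum (gp_of S z) (gp_of T (contraction S z))"
proof -
  let ?P = "gp_of (S \<union> T) z"
  obtain x0 where x0: "x0 \<in> max_face S ?P" using G by blast
  define s where "s = coord_sum S x0"
  have zS: "z S = ereal s" using tight_max_face[OF sm x0] by (simp add: tight_def s_def)
  then show "z S \<noteq> \<infinity>" by simp
  have char: "x \<in> max_face S ?P \<longleftrightarrow> x \<in> ?P \<and> coord_sum S x = s" for x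
  proof
    assume "x \<in> max_face S ?P"
    then show "x \<in> ?P \<and> coord_sum S x = s"
      using tight_max_face[OF sm] zS by (auto simp: max_face_eq tight_def)
  next
    assume x: "x \<in> ?P \<and> coord_sum S x = s"
    have "coord_sum S y \<le> s" if "y \<in> ?P" for y using gp_ofD(3)[OF that, of S] zS by auto
    then show "x \<in> max_face S ?P" using x by (auto simp: max_face_eq)
  qed
  show "max_face S ?P = minkowski_sum (gp_of S z) (gp_of T (contraction S z))"
  proof
    show "max_face S ?P \<subseteq> minkowski_sum (gp_of S z) (gp_of T (contraction S z))"
    proof
      fix x assume "x \<in> max_face S ?P"
      then have x: "x \<in> ?P" "z S = ereal (coord_sum S x)" using char zS by auto
      have "x = coord_proj S x + coord_proj T x" using coord_proj_split[OF disj gp_ofD(1)[OF x(1)]] .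
      then show "x \<in> minkowski_sum (gp_of S z) (gp_of T (contraction S z))"
        using coord_proj_mem_gp_of[OF x] unfolding minkowski_sum_def by blast
    qed
    show "minkowski_sum (gp_of S z) (gp_of T (contraction S z)) \<subseteq> max_face S ?P"
      using add_mem_gp_of[OF sm zS] char by (auto simp: minkowski_sum_def)
  qed
qed

end

lemma mem_tangent_cone_convex:
  assumes "convex P" "f \<in> P" "p \<in> P"
  shows "p \<in> tangent_cone P f"
proof -
  have "f + \<epsilon> *\<^sub>R (p - f) \<in> P" if "0 < \<epsilon>" "\<epsilon> < 1" for \<epsilon>
  proof -
    have "f + \<epsilon> *\<^sub>R (p - f) = (1 - \<epsilon>) *\<^sub>R f + \<epsilon> *\<^sub>R p" by (simp add: algebra_simps)
    then show ?thesis using assms that convexD[OF assms(1) assms(2) assms(3), of "1 - \<epsilon>" \<epsilon>] by simp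
  qed
  moreover have "p = f + (p - f)" by simp
  ultimately show ?thesis unfolding tangent_cone_def by (intro CollectI exI[of _ "p - f"]) (auto intro!: exI[of _ 1])
qed

lemma tangent_cone_scaleR:
  assumes "f + x \<in> tangent_cone P f" "t > 0"
  shows "f + t *\<^sub>R x \<in> tangent_cone P f"
proof -
  obtain x' e where x': "f + x = f + x'" and e: "e > 0" and ex: "\<forall>\<epsilon>. 0 < \<epsilon> \<and> \<epsilon> < e \<longrightarrow> f + \<epsilon> *\<^sub>R x' \<in> P"
    using assms(1) unfolding tangent_cone_def by blast
  have xx: "x' = x" using x' by simp
  have "\<forall>\<epsilon>. 0 < \<epsilon> \<and> \<epsilon> < e / t \<longrightarrow> f + \<epsilon> *\<^sub>R (t *\<^sub>R x) \<in> P"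
  proof (intro allI impI)
    fix \<epsilon> assume "0 < \<epsilon> \<and> \<epsilon> < e / t"
    then have "0 < \<epsilon> * t \<and> \<epsilon> * t < e" using assms(2) by (simp add: field_simps)
    then show "f + \<epsilon> *\<^sub>R (t *\<^sub>R x) \<in> P" using ex xx by simp
  qed
  moreover have "e / t > 0" using e assms(2) by simp
  ultimately show ?thesis unfolding tangent_cone_def by blast
qed

lemma self_mem_tangent_cone: "f \<in> P \<Longrightarrow> f \<in> tangent_cone P f" for P :: "('e::finite) poly"
proof -
  assume "f \<in> P"
  then have "\<exists>e>0. \<forall>\<epsilon>. 0 < \<epsilon> \<and> \<epsilon> < e \<longrightarrow> f + \<epsilon> *\<^sub>R (0::'e pt) \<in> P" by (intro exI[of _ 1]) auto
  then have "f + 0 \<in> tangent_cone P f" unfolding tangent_cone_def by blast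
  then show ?thesis by simp
qed

lemma max_face_face_of:
  fixes P :: "('e::finite) poly"
  assumes cP: "convex P" and f: "f \<in> max_face S P"
  shows "max_face S P = P \<inter> {x. indicator_vec S \<bullet> x = coord_sum S f}" "max_face S P face_of P"
proof -
  have fP: "f \<in> P" and fm: "\<forall>y\<in>P. coord_sum S y \<le> coord_sum S f" using f by (auto simp: max_face_eq)
  show eq: "max_face S P = P \<inter> {x. indicator_vec S \<bullet> x = coord_sum S f}"
    using fP fm by (auto simp: max_face_eq coord_sum_inner[symmetric] intro: antisym)
  have "(P \<inter> {x. indicator_vec S \<bullet> x = coord_sum S f}) face_of P"
    by (rule face_of_Int_supporting_hyperplane_le[OF cP]) (use fm in \<open>auto simp: coord_sum_inner\<close>)
  then show "max_face S P face_of P" using eq by simp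
qed

lemma bounded_above_tangent_cone:
  fixes P :: "('e::finite) poly"
  assumes cP: "convex P" and F: "F face_of P" "F \<noteq> {}" and bd: "bounded_above_on S (tangent_cone P f)"
    and f: "f \<in> rel_interior F"
  shows "bounded_above_on S P \<and> F \<subseteq> max_face S P"
proof -
  have fF: "f \<in> F" using f rel_interior_subset by blast
  have fP: "f \<in> P" using fF F face_of_imp_subset by blast
  obtain M where M: "\<And>y. y \<in> tangent_cone P f \<Longrightarrow> coord_sum S y \<le> M" using bd by (auto simp: bounded_above_on_def coord_sum_def)
  have le: "coord_sum S p \<le> coord_sum S f" if p: "p \<in> P" for p
  proof (rule ccontr)
    assume "\<not> coord_sum S p \<le> coord_sum S f"
    then have pos: "coord_sum S (p - f) > 0" by (simp add: coord_sum_diff)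
    define t where "t = (\<bar>M - coord_sum S f\<bar> + 1) / coord_sum S (p - f)"
    have t: "t > 0" using pos by (simp add: t_def)
    have "f + (p - f) \<in> tangent_cone P f" using mem_tangent_cone_convex[OF cP fP p] by simp
    then have "f + t *\<^sub>R (p - f) \<in> tangent_cone P f" using tangent_cone_scaleR t by blast
    then have "coord_sum S (f + t *\<^sub>R (p - f)) \<le> M" by (rule M)
    moreover have "coord_sum S (f + t *\<^sub>R (p - f)) = coord_sum S f + \<bar>M - coord_sum S f\<bar> + 1"
      using pos by (simp add: coord_sum_add coord_sum_scaleR t_def)
    ultimately show False by linarith
  qed
  then have fmax: "f \<in> max_face S P" using fP by (simp add: max_face_eq)
  have "bounded_above_on S P" using le unfolding bounded_above_on_def coord_sum_def by blast
  moreover have "F \<subseteq> max_face S P"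
    by (rule subset_of_face_of[OF max_face_face_of(2)[OF cP fmax] face_of_imp_subset[OF F(1)]]) (use f fmax in blast)
  ultimately show ?thesis by blast
qed

lemma coord_sum_le_tangent_cone:
  assumes f: "f \<in> max_face S P" and y: "y \<in> tangent_cone P f"
  shows "coord_sum S y \<le> coord_sum S f"
proof -
  obtain x e where y: "y = f + x" and e: "e > 0" and ex: "\<forall>\<epsilon>. 0 < \<epsilon> \<and> \<epsilon> < e \<longrightarrow> f + \<epsilon> *\<^sub>R x \<in> P"
    using y unfolding tangent_cone_def by blast
  have "f + (e/2) *\<^sub>R x \<in> P" using ex e by simp
  then have "coord_sum S (f + (e/2) *\<^sub>R x) \<le> coord_sum S f" using f by (auto simp: max_face_eq)
  then have "(e/2) * coord_sum S x \<le> 0" by (simp add: coord_sum_add coord_sum_scaleR)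
  then show ?thesis using e y by (simp add: coord_sum_add mult_le_0_iff)
qed

lemma max_face_tangent_cone_level:
  fixes P :: "('e::finite) poly"
  assumes f: "f \<in> max_face S P"
  shows "y \<in> max_face S (tangent_cone P f) \<longleftrightarrow> y \<in> tangent_cone P f \<and> coord_sum S y = coord_sum S f"
proof
  have fP: "f \<in> P" using f by (simp add: max_face_eq)
  assume "y \<in> max_face S (tangent_cone P f)"
  then have "y \<in> tangent_cone P f" "coord_sum S f \<le> coord_sum S y"
    using self_mem_tangent_cone[OF fP] by (auto simp: max_face_eq)
  then show "y \<in> tangent_cone P f \<and> coord_sum S y = coord_sum S f"
    using coord_sum_le_tangent_cone[OF f] by (simp add: order_antisym)
next
  assume "y \<in> tangent_cone P f \<and> coord_sum S y = coord_sum S f"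
  then show "y \<in> max_face S (tangent_cone P f)"
    using coord_sum_le_tangent_cone[OF f] by (auto simp: max_face_eq)
qed

lemma max_face_tangent_cone:
  fixes P :: "('e::finite) poly"
  assumes cP: "convex P" and f: "f \<in> max_face S P"
  shows "max_face S (tangent_cone P f) = tangent_cone (max_face S P) f"
proof -
  have G: "max_face S P = P \<inter> {x. coord_sum S x = coord_sum S f}"
    using max_face_face_of(1)[OF cP f] by (simp add: coord_sum_inner)
  have dir: "f + x \<in> tangent_cone P f \<and> coord_sum S (f + x) = coord_sum S f \<longleftrightarrow>
      f + x \<in> tangent_cone (max_face S P) f" for x
  proof
    assume x: "f + x \<in> tangent_cone P f \<and> coord_sum S (f + x) = coord_sum S f"
    then obtain e where e: "e > 0" "\<forall>\<epsilon>. 0 < \<epsilon> \<and> \<epsilon> < e \<longrightarrow> f + \<epsilon> *\<^sub>R x \<in> P"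
      unfolding tangent_cone_def by auto
    moreover have "coord_sum S x = 0" using x by (simp add: coord_sum_add)
    ultimately show "f + x \<in> tangent_cone (max_face S P) f"
      unfolding tangent_cone_def G by (auto simp: coord_sum_add coord_sum_scaleR)
  next
    assume "f + x \<in> tangent_cone (max_face S P) f"
    then obtain e where e: "e > 0" "\<forall>\<epsilon>. 0 < \<epsilon> \<and> \<epsilon> < e \<longrightarrow> f + \<epsilon> *\<^sub>R x \<in> max_face S P"
      unfolding tangent_cone_def by auto
    then have "f + (e/2) *\<^sub>R x \<in> max_face S P" by simp
    then have "coord_sum S x = 0" using e(1) by (simp add: G coord_sum_add coord_sum_scaleR)
    moreover have "f + x \<in> tangent_cone P f" using e unfolding tangent_cone_def G by auto
    ultimately show "f + x \<in> tangent_cone P f \<and> coord_sum S (f + x) = coord_sum S f"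
      by (simp add: coord_sum_add)
  qed
  show ?thesis
  proof (intro set_eqI)
    fix y
    have "f + (y - f) = y" by simp
    then show "y \<in> max_face S (tangent_cone P f) \<longleftrightarrow> y \<in> tangent_cone (max_face S P) f"
      using max_face_tangent_cone_level[OF f, of y] dir[of "y - f"] by simp
  qed
qed

lemma lineality_subset_lineality_max_face: "lineality P \<subseteq> lineality (max_face S P)"
proof
  fix d assume d: "d \<in> lineality P"
  then have line: "\<And>x t. x \<in> P \<Longrightarrow> x + t *\<^sub>R d \<in> P" by (simp add: lineality_def)
  show "d \<in> lineality (max_face S P)" unfolding lineality_def
  proof (intro CollectI ballI allI)
    fix x t assume x: "x \<in> max_face S P"
    then have xP: "x \<in> P" and xm: "\<And>y. y \<in> P \<Longrightarrow> coord_sum S y \<le> coord_sum S x"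
      by (auto simp: max_face_eq)
    have "coord_sum S (x + 1 *\<^sub>R d) \<le> coord_sum S x" "coord_sum S (x + (-1) *\<^sub>R d) \<le> coord_sum S x"
      using xm line[OF xP] by blast+
    then have "coord_sum S d = 0" by (simp add: coord_sum_add coord_sum_scaleR coord_sum_diff)
    then have "coord_sum S (x + t *\<^sub>R d) = coord_sum S x" by (simp add: coord_sum_add coord_sum_scaleR)
    then show "x + t *\<^sub>R d \<in> max_face S P" using line[OF xP] xm by (auto simp: max_face_eq)
  qed
qed

text \<open>A line inside gp_of I z is orthogonal to the normal of every finite constraint, so its direction
  lies in the lineality space.\<close>

lemma lineality_subset_gp_of:
  fixes X :: "('e::finite) poly"
  assumes sm: "ext_submodular I z" and X: "X \<subseteq> gp_of I z" "X \<noteq> {}"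
  shows "lineality X \<subseteq> lineality (gp_of I z)"
proof
  fix d assume d: "d \<in> lineality X"
  obtain g where g: "g \<in> X" using X(2) by blast
  have line: "g + t *\<^sub>R d \<in> gp_of I z" for t using d g X(1) by (auto simp: lineality_def)
  have dR: "d \<in> RI I"
    using RI_diff[OF gp_ofD(1)[OF line[of 1]] gp_ofD(1)[OF line[of 0]]] by simp
  have dA: "coord_sum A d = 0" if A: "A \<subseteq> I" "z A \<noteq> \<infinity>" for A
  proof (rule ccontr)
    assume ne: "coord_sum A d \<noteq> 0"
    obtain r where r: "z A = ereal r" using A ext_submodularD(1)[OF sm A(1)] by (cases "z A") auto
    define t where "t = (\<bar>r - coord_sum A g\<bar> + 1) / coord_sum A d"
    have "t * coord_sum A d = \<bar>r - coord_sum A g\<bar> + 1" using ne by (simp add: t_def)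
    moreover have "coord_sum A g + t * coord_sum A d \<le> r"
      using gp_ofD(3)[OF line[of t] A(1)] r by (simp add: coord_sum_add coord_sum_scaleR)
    ultimately show False by linarith
  qed
  have "coord_sum I (g + 1 *\<^sub>R d) = coord_sum I (g + 0 *\<^sub>R d)"
    using gp_ofD(2)[OF line[of 1]] gp_ofD(2)[OF line[of 0]] by (metis ereal.inject)
  then have dI: "coord_sum I d = 0" by (simp add: coord_sum_add)
  show "d \<in> lineality (gp_of I z)" unfolding lineality_def
  proof (intro CollectI ballI allI)
    fix x t assume x: "x \<in> gp_of I z"
    have "ereal (coord_sum A (x + t *\<^sub>R d)) \<le> z A" if A: "A \<subseteq> I" for A
      using gp_ofD(3)[OF x A] dA[OF A] by (cases "z A = \<infinity>") (simp_all add: coord_sum_add coord_sum_scaleR)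
    then show "x + t *\<^sub>R d \<in> gp_of I z"
      using gp_ofD(1,2)[OF x] dR dI by (simp add: gp_of_eq RI_add RI_scaleR coord_sum_add coord_sum_scaleR)
  qed
qed

lemma lineality_max_face:
  assumes P: "P \<in> GP I" and G: "max_face S P \<noteq> {}"
  shows "lineality (max_face S P) = lineality P"
proof -
  obtain z where z: "ext_submodular I z" "P = gp_of I z" using P by (rule GP_E)
  have "max_face S P \<subseteq> P" by (auto simp: max_face_def)
  then show ?thesis
    using lineality_subset_gp_of[OF z(1) _ G] lineality_subset_lineality_max_face z(2) by blast
qed

lemma rb_faces_max_face:
  assumes P: "P \<in> GP I" and G: "max_face S P \<noteq> {}"
  shows "rb_faces (max_face S P) = {F \<in> rb_faces P. F \<subseteq> max_face S P}"
proof -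
  obtain g where "g \<in> max_face S P" using G by blast
  then have "max_face S P face_of P" using max_face_face_of(2)[OF convex_GP[OF P]] by blast
  then show ?thesis
    unfolding rb_faces_def rel_bounded_face_def lineality_max_face[OF P G]
    using face_of_face by auto
qed

lemma face_cone_nonempty:
  fixes P :: "('e::finite) poly"
  assumes "F face_of P" "F \<noteq> {}"
  shows "face_cone P F \<noteq> {}"
  using some_rel_interior[OF assms] rel_interior_subset face_of_imp_subset[OF assms(1)]
    self_mem_tangent_cone unfolding face_cone_def by blast

lemma bounded_above_face_cone_iff:
  assumes P: "P \<in> GP I" and F: "F \<in> rb_faces P"
  shows "bounded_above_on S (face_cone P F) \<longleftrightarrow> bounded_above_on S P \<and> F \<subseteq> max_face S P"
proof -
  have F': "F face_of P" "F \<noteq> {}" using F by (auto simp: rb_faces_def)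
  define f where "f = (SOME f. f \<in> rel_interior F)"
  have f: "f \<in> rel_interior F" unfolding f_def by (rule some_rel_interior[OF F'])
  have "f \<in> max_face S P" if "F \<subseteq> max_face S P" using that f rel_interior_subset by blast
  then have "bounded_above_on S (tangent_cone P f)" if "F \<subseteq> max_face S P"
    using that coord_sum_le_tangent_cone unfolding bounded_above_on_def coord_sum_def by blast
  then show ?thesis
    using bounded_above_tangent_cone[OF convex_GP[OF P] F' _ f] unfolding face_cone_def f_def[symmetric]
    by blast
qed

lemma max_face_face_cone:
  assumes P: "P \<in> GP I" and F: "F \<in> rb_faces P" "F \<subseteq> max_face S P"
  shows "max_face S (face_cone P F) = face_cone (max_face S P) F"
proof -
  have "(SOME f. f \<in> rel_interior F) \<in> max_face S P"
    using some_rel_interior F rel_interior_subset by (fastforce simp: rb_faces_def)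
  then show ?thesis unfolding face_cone_def using max_face_tangent_cone[OF convex_GP[OF P]] by blast
qed

lemma bg_basis_empty: "bg_basis {} = (\<lambda>_. 0)"
proof
  fix R
  have "{F. F face_of {} \<and> F \<noteq> {} \<and> rel_bounded_face {} F \<and> face_cone {} F = R} = {}" by auto
  then show "bg_basis {} R = 0" unfolding bg_basis_def by (simp only: sum.empty)
qed

context
  fixes S T :: "('e::finite) set"
  assumes disj: "S \<inter> T = {}"
begin

lemma max_face_GP:
  assumes P: "P \<in> GP (S \<union> T)" and G: "max_face S P \<noteq> {}"
  obtains G1 G2 where "G1 \<in> GP S" "G2 \<in> GP T" "max_face S P = minkowski_sum G1 G2"
proof -
  obtain z where z: "ext_submodular (S \<union> T) z" "P = gp_of (S \<union> T) z" using P by (rule GP_E)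
  have zS: "z S \<noteq> \<infinity>" using max_face_gp_of[OF disj z(1)] G z(2) by auto
  have "gp_of S z \<in> GP S" using ext_submodular_restriction[OF z(1) _ zS] by (auto simp: GP_def)
  moreover have "gp_of T (contraction S z) \<in> GP T"
    using ext_submodular_contraction[OF z(1) zS] by (auto simp: GP_def)
  ultimately show ?thesis using that max_face_gp_of[OF disj z(1)] G z(2) by auto
qed

lemma bg_basis_restr_max_face:
  fixes R1 R2 :: "'e poly"
  assumes P: "P \<in> GP (S \<union> T)" and G: "max_face S P \<noteq> {}"
  shows "bg_basis (restr S (max_face S P)) R1 * bg_basis (restr T (max_face S P)) R2 =
    (\<Sum>H\<in>rb_faces (max_face S P). (-1) ^ dimension H * basis_vec
      (restr S (face_cone (max_face S P) H), restr T (face_cone (max_face S P) H)) (R1, R2) :: 'k::comm_ring_1)"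
proof -
  obtain G1 G2 where G1: "G1 \<in> GP S" and G2: "G2 \<in> GP T" and G12: "max_face S P = minkowski_sum G1 G2"
    using max_face_GP[OF P G] by blast
  have fin: "finite (rb_faces G1)" "finite (rb_faces G2)" using finite_rb_faces G1 G2 by auto
  have restr: "restr S (minkowski_sum C D) = C" "restr T (minkowski_sum C D) = D"
    if "C \<subseteq> RI S" "D \<subseteq> RI T" "C \<noteq> {}" "D \<noteq> {}" for C D
    using coord_proj_minkowski_sum_left[OF disj] coord_proj_minkowski_sum_right[OF disj] that
    by (simp_all add: restr_eq_image)
  have G12ne: "G1 \<noteq> {}" "G2 \<noteq> {}" using G G12 by (auto simp: minkowski_sum_def)
  have cones: "restr S (minkowski_sum (face_cone G1 F1) (face_cone G2 F2)) = face_cone G1 F1"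
      "restr T (minkowski_sum (face_cone G1 F1) (face_cone G2 F2)) = face_cone G2 F2"
    if "F1 \<in> rb_faces G1" "F2 \<in> rb_faces G2" for F1 F2
  proof -
    have F: "F1 face_of G1" "F1 \<noteq> {}" "F2 face_of G2" "F2 \<noteq> {}" using that by (auto simp: rb_faces_def)
    then have "face_cone G1 F1 \<subseteq> RI S" "face_cone G2 F2 \<subseteq> RI T"
      using face_cone_in_GP[OF G1] face_cone_in_GP[OF G2] GP_subset_RI by blast+
    moreover have "face_cone G1 F1 \<noteq> {}" "face_cone G2 F2 \<noteq> {}" using face_cone_nonempty F by blast+
    ultimately show "restr S (minkowski_sum (face_cone G1 F1) (face_cone G2 F2)) = face_cone G1 F1"
      "restr T (minkowski_sum (face_cone G1 F1) (face_cone G2 F2)) = face_cone G2 F2"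
      by (simp_all add: restr)
  qed
  have "bg_basis (restr S (max_face S P)) R1 * bg_basis (restr T (max_face S P)) R2
    = (\<Sum>F1\<in>rb_faces G1. \<Sum>F2\<in>rb_faces G2. (-1) ^ dimension F1 * (-1) ^ dimension F2 *
        basis_vec (face_cone G1 F1, face_cone G2 F2) (R1, R2) :: 'k)"
    using G1 G2 G12ne
    by (simp add: G12 restr GP_subset_RI bg_basis_eq_lin_ext fin lin_ext_face_sign sum_product)
      (auto simp: basis_vec_def intro!: sum.cong split: if_split_asm)
  also have "\<dots> = (\<Sum>F1\<in>rb_faces G1. \<Sum>F2\<in>rb_faces G2. (-1) ^ dimension F1 * (-1) ^ dimension F2 *
      (\<lambda>C. basis_vec (restr S C, restr T C) (R1, R2)) (minkowski_sum (face_cone G1 F1) (face_cone G2 F2)))"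
    by (simp add: cones)
  also have "\<dots> = (\<Sum>H\<in>rb_faces (max_face S P). (-1) ^ dimension H *
      basis_vec (restr S (face_cone (max_face S P) H), restr T (face_cone (max_face S P) H)) (R1, R2))"
    unfolding G12 by (rule sum_rb_faces_minkowski_sum[OF disj G1 G2, symmetric])
  finally show ?thesis .
qed

lemma comult_bg_basis:
  assumes P: "P \<in> GP (S \<union> T)"
  shows "comult S T (bg_basis P) = (if bounded_above_on S P
    then (\<lambda>(R1, R2). bg_basis (restr S (max_face S P)) R1 * bg_basis (restr T (max_face S P)) R2)
    else (\<lambda>_. 0 :: 'k::comm_ring_1))"
proof (rule ext, clarify)
  fix R1 R2 :: "'e poly"
  let ?G = "max_face S P"
  let ?w = "\<lambda>C. basis_vec (restr S (max_face S C), restr T (max_face S C)) (R1, R2) :: 'k"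
  have fP: "finite (rb_faces P)" using finite_rb_faces[OF P] .
  have "comult S T (bg_basis P) (R1, R2) = (\<Sum>F\<in>rb_faces P. (-1) ^ dimension F *
      (if bounded_above_on S (face_cone P F) then ?w (face_cone P F) else 0))"
    unfolding bg_basis_eq_lin_ext[OF fP]
    by (subst comult_lin_ext) (auto simp: finite_supp_face_sign fP finite_supp_basis_vec
        lin_ext_face_sign comult_basis_vec if_distrib[of "\<lambda>g. g (R1, R2)"] cong: if_cong)
  also have "\<dots> = (\<Sum>F\<in>rb_faces P. if bounded_above_on S P \<and> F \<subseteq> ?G
      then (-1) ^ dimension F * basis_vec (restr S (face_cone ?G F), restr T (face_cone ?G F)) (R1, R2)
      else 0)"
    using bounded_above_face_cone_iff[OF P] max_face_face_cone[OF P] by (intro sum.cong) auto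
  also have "\<dots> = (if bounded_above_on S P then bg_basis (restr S ?G) R1 * bg_basis (restr T ?G) R2 else 0)"
  proof (cases "bounded_above_on S P \<and> ?G \<noteq> {}")
    case True
    then show ?thesis
      using fP by (simp add: bg_basis_restr_max_face[OF P] rb_faces_max_face[OF P] sum.inter_filter)
  next
    case False
    then show ?thesis by (auto simp: rb_faces_def restr_def bg_basis_empty)
  qed
  finally show "comult S T (bg_basis P) (R1, R2) = (if bounded_above_on S P
    then (\<lambda>(R1, R2). bg_basis (restr S ?G) R1 * bg_basis (restr T ?G) R2) else (\<lambda>_. 0 :: 'k)) (R1, R2)"
    by simp
qed

end

lemma bg_comult:
  fixes a :: "('e::finite) poly \<Rightarrow> 'k::comm_ring_1"
  assumes disj: "S \<inter> T = {}" and a: "a \<in> span_of (GP (S \<union> T))"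
  shows "comult S T (bg a) = tensor_ext bg_basis bg_basis (comult S T a)"
proof -
  have fin: "finite (supp a)" and sub: "supp a \<subseteq> GP (S \<union> T)" using a by (auto simp: span_of_def)
  have "comult S T (bg a) = lin_ext (\<lambda>P. comult S T (bg_basis P)) a"
    unfolding bg_def using fin sub finite_supp_bg_basis by (intro comult_lin_ext) auto
  also have "\<dots> = lin_ext (\<lambda>P. if bounded_above_on S P then (\<lambda>(R1, R2).
      bg_basis (restr S (max_face S P)) R1 * bg_basis (restr T (max_face S P)) R2) else (\<lambda>_. 0)) a"
    using sub by (intro lin_ext_cong) (auto simp: comult_bg_basis[OF disj])
  also have "\<dots> = tensor_ext bg_basis bg_basis (comult S T a)"
    by (rule tensor_ext_comult[OF fin, symmetric])
  finally show ?thesis .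
qed

theorem proposition3p1:
  fixes dummy :: "'k::field itself"
  shows
   \<comment> \<open>each cone_F(P) appearing lies in CGP^+[I]\<close>
   "(\<forall>(I::('e::finite) set) P F. P \<in> GP I \<and> F face_of P \<and> F \<noteq> {} \<and> rel_bounded_face P F
        \<longrightarrow> face_cone P F \<in> CGP I)
   \<and> \<comment> \<open>bg[I] maps GP^+[I] into CGP^+[I]\<close>
     (\<forall>(I::'e set) (c::'e poly \<Rightarrow> 'k). c \<in> span_of (GP I) \<longrightarrow> bg c \<in> span_of (CGP I))
   \<and> \<comment> \<open>naturality (morphism of species)\<close>
     (\<forall>(I::'e set) \<sigma> (c::'e poly \<Rightarrow> 'k). bij \<sigma> \<longrightarrow> c \<in> span_of (GP I) \<longrightarrow>
        bg (relabel \<sigma> c) = relabel \<sigma> (bg c))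
   \<and> \<comment> \<open>unit\<close>
     bg (unit_elt :: 'e poly \<Rightarrow> 'k) = unit_elt
   \<and> \<comment> \<open>multiplicativity\<close>
     (\<forall>(S::'e set) T (a::'e poly \<Rightarrow> 'k) b. S \<inter> T = {} \<longrightarrow>
        a \<in> span_of (GP S) \<longrightarrow> b \<in> span_of (GP T) \<longrightarrow>
        bg (mult S a b) = mult S (bg a) (bg b))
   \<and> \<comment> \<open>counit\<close>
     (\<forall>c::'e poly \<Rightarrow> 'k. c \<in> span_of (GP {}) \<longrightarrow> counit (bg c) = counit c)
   \<and> \<comment> \<open>comultiplicativity\<close>
     (\<forall>(S::'e set) T (a::'e poly \<Rightarrow> 'k). S \<inter> T = {} \<longrightarrow> a \<in> span_of (GP (S \<union> T)) \<longrightarrow>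
        comult S T (bg a) = tensor_ext bg_basis bg_basis (comult S T a))"
  using face_cone_in_CGP bg_span_CGP bg_relabel bg_unit bg_mult counit_bg bg_comult by blast

end
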